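(* Let $v,w:\mathbb{C}\rightarrow\mathbb{R}$ be two solutions of the sinh-Gordon equation, $v_{z\bar z}+\frac12\sinh(2v)=0$ and $w_{z\bar z}+\frac12\sinh(2w)=0$. Then there exists a $1$-parameter family of minimal immersions $\Phi_t:\mathbb{C}\rightarrow\mathbb{S}^2\times\mathbb{S}^2$, $t\in\mathbb{R}$, without complex points, whose induced metric is $4\cosh(v+w)\cosh(v-w)|dz|^2$, whose Kähler functions are $C_1=\tanh(v-w)$ and $C_2=\tanh(v+w)$, and whose Hopf $2$-differentials are $\Theta_t=e^{it}dz\otimes dz$.
   Context: $\mathbb{S}^2\subset\mathbb{R}^3$ has standard metric, complex structure $J$ ($J_xv=x\times v$), Kähler form $\omega=\langle J\cdot,\cdot\rangle$. $\mathbb{S}^2\times\mathbb{S}^2$ has the product metric, $J_1=(J,J)$, $J_2=(J,-J)$, Kähler forms $\omega_1=\pi_1^*\omega+\pi_2^*\omega$, $\omega_2=\pi_1^*\omega-\pi_2^*\omega$, orientation $\pi_1^*\omega\wedge\pi_2^*\omega$. Kähler functions: $\Phi^*\omega_j=C_j\omega_\Sigma$; complex points: where $C_1^2=1$ or $C_2^2=1$. The Hopf $2$-differential of a minimal immersion $\Phi$ is $\Theta=\frac12\langle J_1\Phi_z,J_2\Phi_z\rangle\,dz\otimes dz$ for a conformal parameter $z$, $\langle\cdot,\cdot\rangle$ extended complex-bilinearly, $\partial_z=\frac12(\partial_x-i\partial_y)$. *)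

theory Defs
  imports "HOL-Analysis.Analysis"
begin

text \<open>Points of S2 x S2 live in R3 x R3 (product inner product = product metric).
  The parameter domain is C = R2, z = x + i y.\<close>

type_synonym pt = "(real^3) \<times> (real^3)"

definition dx :: "(complex \<Rightarrow> 'a::real_normed_vector) \<Rightarrow> complex \<Rightarrow> 'a" where
  "dx f z = frechet_derivative f (at z) 1"

definition dy :: "(complex \<Rightarrow> 'a::real_normed_vector) \<Rightarrow> complex \<Rightarrow> 'a" where
  "dy f z = frechet_derivative f (at z) \<i>"

definition C2 :: "(complex \<Rightarrow> 'a::real_normed_vector) \<Rightarrow> bool" where
  "C2 f \<longleftrightarrow> (\<forall>z. f differentiable at z) \<and>
     (\<forall>z. dx f differentiable at z \<and> dy f differentiable at z) \<and>
     continuous_on UNIV (dx f) \<and> continuous_on UNIV (dy f) \<and>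
     continuous_on UNIV (dx (dx f)) \<and> continuous_on UNIV (dy (dx f)) \<and>
     continuous_on UNIV (dx (dy f)) \<and> continuous_on UNIV (dy (dy f))"

text \<open>sinh-Gordon equation u_{z zbar} + 1/2 sinh(2u) = 0, with u_{z zbar} = (u_xx + u_yy)/4.\<close>
definition sinh_gordon :: "(complex \<Rightarrow> real) \<Rightarrow> bool" where
  "sinh_gordon u \<longleftrightarrow> C2 u \<and>
     (\<forall>z. (dx (dx u) z + dy (dy u) z) / 4 + sinh (2 * u z) / 2 = 0)"

definition in_S2xS2 :: "pt \<Rightarrow> bool" where
  "in_S2xS2 p \<longleftrightarrow> norm (fst p) = 1 \<and> norm (snd p) = 1"

text \<open>Complex structures J1 = (J,J), J2 = (J,-J), J_x v = x \<times> v.\<close>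
definition J1 :: "pt \<Rightarrow> pt \<Rightarrow> pt" where
  "J1 p u = (cross3 (fst p) (fst u), cross3 (snd p) (snd u))"

definition J2 :: "pt \<Rightarrow> pt \<Rightarrow> pt" where
  "J2 p u = (cross3 (fst p) (fst u), - cross3 (snd p) (snd u))"

definition tang_proj :: "pt \<Rightarrow> pt \<Rightarrow> pt" where
  "tang_proj p a = (fst a - (fst a \<bullet> fst p) *\<^sub>R fst p, snd a - (snd a \<bullet> snd p) *\<^sub>R snd p)"

definition conformal_immersion_metric :: "(complex \<Rightarrow> pt) \<Rightarrow> (complex \<Rightarrow> real) \<Rightarrow> bool" where
  "conformal_immersion_metric \<Phi> lam \<longleftrightarrow> C2 \<Phi> \<and> (\<forall>z. in_S2xS2 (\<Phi> z)) \<and>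
     (\<forall>z. inj (frechet_derivative \<Phi> (at z))) \<and>
     (\<forall>z. lam z > 0 \<and> dx \<Phi> z \<bullet> dx \<Phi> z = lam z \<and> dy \<Phi> z \<bullet> dy \<Phi> z = lam z
          \<and> dx \<Phi> z \<bullet> dy \<Phi> z = 0)"

text \<open>Mean curvature vector of a conformal immersion with metric lam |dz|^2 in S2 x S2:
  tangential (to S2 x S2) part of the Laplace-Beltrami of Phi, (Phi_xx + Phi_yy)/lam.\<close>
definition mean_curvature :: "(complex \<Rightarrow> pt) \<Rightarrow> (complex \<Rightarrow> real) \<Rightarrow> complex \<Rightarrow> pt" where
  "mean_curvature \<Phi> lam z =
     tang_proj (\<Phi> z) ((1 / lam z) *\<^sub>R (dx (dx \<Phi>) z + dy (dy \<Phi>) z))"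

definition minimal_conformal_immersion :: "(complex \<Rightarrow> pt) \<Rightarrow> (complex \<Rightarrow> real) \<Rightarrow> bool" where
  "minimal_conformal_immersion \<Phi> lam \<longleftrightarrow> conformal_immersion_metric \<Phi> lam \<and>
     (\<forall>z. mean_curvature \<Phi> lam z = 0)"

text \<open>Kaehler functions: Phi^* omega_j = C_j omega_Sigma, where
  omega_j(u,v) = <J_j u, v> and omega_Sigma(d_x,d_y) = lam (area form, orientation dx \<and> dy).\<close>
definition kaehler1 :: "(complex \<Rightarrow> pt) \<Rightarrow> (complex \<Rightarrow> real) \<Rightarrow> complex \<Rightarrow> real" where
  "kaehler1 \<Phi> lam z = (J1 (\<Phi> z) (dx \<Phi> z) \<bullet> dy \<Phi> z) / lam z"

definition kaehler2 :: "(complex \<Rightarrow> pt) \<Rightarrow> (complex \<Rightarrow> real) \<Rightarrow> complex \<Rightarrow> real" where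
  "kaehler2 \<Phi> lam z = (J2 (\<Phi> z) (dx \<Phi> z) \<bullet> dy \<Phi> z) / lam z"

text \<open>Complex-bilinear extension of the inner product; a complex vector a + i b is a pair (a,b).\<close>
definition cinner :: "pt \<times> pt \<Rightarrow> pt \<times> pt \<Rightarrow> complex" where
  "cinner u v = Complex (fst u \<bullet> fst v - snd u \<bullet> snd v) (fst u \<bullet> snd v + snd u \<bullet> fst v)"

text \<open>Phi_z = (Phi_x - i Phi_y)/2, as a pair (real part, imaginary part).\<close>
definition dz :: "(complex \<Rightarrow> pt) \<Rightarrow> complex \<Rightarrow> pt \<times> pt" where
  "dz \<Phi> z = ((1/2) *\<^sub>R dx \<Phi> z, - (1/2) *\<^sub>R dy \<Phi> z)"

text \<open>Coefficient of the Hopf differential Theta = 1/2 <J1 Phi_z, J2 Phi_z> dz \<otimes> dz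
  (J_j extended complex-linearly).\<close>
definition hopf :: "(complex \<Rightarrow> pt) \<Rightarrow> complex \<Rightarrow> complex" where
  "hopf \<Phi> z = (1/2) * cinner
      (J1 (\<Phi> z) (fst (dz \<Phi> z)), J1 (\<Phi> z) (snd (dz \<Phi> z)))
      (J2 (\<Phi> z) (fst (dz \<Phi> z)), J2 (\<Phi> z) (snd (dz \<Phi> z)))"

end

theory Submission
  imports Defs
begin

text \<open>The sinh-Gordon equation \<open>\<Delta>u = -2 sinh 2u\<close> is the zero-curvature condition
  \<open>A\<^sub>y - B\<^sub>x = [A, B]\<close> of a pair of \<open>so(3)\<close>-valued matrices built from \<open>u\<close> and a unit vector
  \<open>(\<kappa>, \<sigma>)\<close>.  By Frobenius' theorem, proved here by Picard iteration, the system
  \<open>F\<^sub>x = F A\<close>, \<open>F\<^sub>y = F B\<close>, \<open>F(0) = 1\<close> has a solution \<open>F\<close> in \<open>SO(3)\<close>, and \<open>\<phi> = F e\<^sub>3\<close> is a harmonic map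
  into \<open>S\<^sup>2\<close> whose derivatives are explicit in \<open>u\<close>.  Pairing the map obtained from \<open>v\<close> with the
  map obtained from \<open>-w\<close>, with unit vectors rotated by \<open>t/2\<close> against each other, gives a
  conformal minimal immersion into \<open>S\<^sup>2 \<times> S\<^sup>2\<close>; its metric, Kaehler functions and Hopf
  differential are then computed from the explicit derivatives.\<close>

section \<open>Continuity and derivatives of matrix-valued functions\<close>

lemma continuous_on_compose_uncurried:
  assumes "continuous_on UNIV (\<lambda>(x, y). g x y)" "continuous_on S a" "continuous_on S b"
  shows "continuous_on S (\<lambda>s. g (a s) (b s))"
  using continuous_on_compose2[OF assms(1) continuous_on_Pair[OF assms(2,3)]] by simp

lemma continuous_on_uncurry: "continuous_on UNIV (\<lambda>p. f (fst p) (snd p)) \<Longrightarrow> continuous_on UNIV (\<lambda>(x, y). f x y)"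
  by (simp add: case_prod_unfold)

lemma continuous_on_add_uncurried:
  "continuous_on UNIV (\<lambda>(x, y). f x y) \<Longrightarrow> continuous_on UNIV (\<lambda>(x, y). g x y) \<Longrightarrow>
   continuous_on UNIV (\<lambda>(x, y). (f x y :: 'a::real_normed_vector) + g x y)"
  using continuous_on_add[of UNIV "\<lambda>(x, y). f x y" "\<lambda>(x, y). g x y"] by (simp add: case_prod_unfold)

lemma norm_vec_power2: "(norm x)\<^sup>2 = (\<Sum>i\<in>UNIV. (norm (x$i))\<^sup>2)"
  by (simp add: norm_vec_def L2_set_def sum_nonneg)

lemma norm_matrix_mult_le: "norm ((A::real^'n^'m) ** (B::real^'k^'n)) \<le> norm A * norm B"
proof -
  have entry: "(norm ((A ** B)$i$j))\<^sup>2 \<le> (norm (A$i))\<^sup>2 * (norm (column j B))\<^sup>2" for i j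
  proof -
    have "(A ** B)$i$j = A$i \<bullet> column j B"
      by (simp add: matrix_matrix_mult_def inner_vec_def column_def)
    then have "norm ((A ** B)$i$j) \<le> norm (A$i) * norm (column j B)"
      using Cauchy_Schwarz_ineq2 by simp
    then show ?thesis
      by (simp add: power_mult_distrib[symmetric] power_mono del: real_norm_def)
  qed
  have col: "(\<Sum>j\<in>UNIV. (norm (column j B))\<^sup>2) = (norm B)\<^sup>2"
  proof -
    have "(\<Sum>j\<in>UNIV. (norm (column j B))\<^sup>2) = (\<Sum>j\<in>UNIV. \<Sum>k\<in>UNIV. (norm (B$k$j))\<^sup>2)"
      by (simp add: norm_vec_power2 column_def)
    also have "\<dots> = (\<Sum>k\<in>UNIV. \<Sum>j\<in>UNIV. (norm (B$k$j))\<^sup>2)"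
      by (rule sum.swap)
    also have "\<dots> = (norm B)\<^sup>2"
      by (simp add: norm_vec_power2)
    finally show ?thesis .
  qed
  have "(norm (A ** B))\<^sup>2 \<le> (\<Sum>i\<in>UNIV. \<Sum>j\<in>UNIV. (norm (A$i))\<^sup>2 * (norm (column j B))\<^sup>2)"
    unfolding norm_vec_power2[of "A ** B"] norm_vec_power2[of "(A ** B)$i" for i] by (intro sum_mono entry)
  also have "\<dots> = (norm A * norm B)\<^sup>2"
    unfolding sum_distrib_left[symmetric] sum_distrib_right[symmetric] col power_mult_distrib
    by (simp add: norm_vec_power2[of A])
  finally show ?thesis by (rule power2_le_imp_le) simp
qed

lemma norm_matrix_vector_mult_le: "norm ((A::real^'n^'m) *v x) \<le> norm A * norm x"
proof -
  have "(norm ((A *v x)$i))\<^sup>2 \<le> (norm (A$i))\<^sup>2 * (norm x)\<^sup>2" for i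
  proof -
    have "norm ((A *v x)$i) \<le> norm (A$i) * norm x"
      using Cauchy_Schwarz_ineq2 by (simp add: matrix_mult_dot)
    then show ?thesis
      by (simp add: power_mult_distrib[symmetric] power_mono del: real_norm_def)
  qed
  then have "(norm (A *v x))\<^sup>2 \<le> (\<Sum>i\<in>UNIV. (norm (A$i))\<^sup>2 * (norm x)\<^sup>2)"
    unfolding norm_vec_power2[of "A *v x"] by (intro sum_mono)
  also have "\<dots> = (norm A * norm x)\<^sup>2"
    by (simp add: sum_distrib_right[symmetric] power_mult_distrib norm_vec_power2[of A])
  finally show ?thesis by (rule power2_le_imp_le) simp
qed

lemma bounded_bilinear_matrix_mult:
  "bounded_bilinear ((**) :: real^'n^'m \<Rightarrow> real^'k^'n \<Rightarrow> real^'k^'m)"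
proof
  fix a a' :: "real^'n^'m" and b b' :: "real^'k^'n" and r :: real
  show "(a + a') ** b = a ** b + a' ** b"
    by (simp add: matrix_matrix_mult_def vec_eq_iff sum.distrib[symmetric] distrib_right)
  show "a ** (b + b') = a ** b + a ** b'" by (rule matrix_add_ldistrib)
  show "(r *\<^sub>R a) ** b = r *\<^sub>R (a ** b)" by (simp add: scalar_matrix_assoc)
  show "a ** (r *\<^sub>R b) = r *\<^sub>R (a ** b)" by (simp add: matrix_scalar_ac scalar_matrix_assoc)
  show "\<exists>K. \<forall>a b. norm ((a::real^'n^'m) ** (b::real^'k^'n)) \<le> norm a * norm b * K"
    using norm_matrix_mult_le by (metis mult.right_neutral)
qed

lemma bounded_bilinear_matrix_vector_mult:
  "bounded_bilinear ((*v) :: real^'n^'m \<Rightarrow> real^'n \<Rightarrow> real^'m)"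
proof
  fix a a' :: "real^'n^'m" and b b' :: "real^'n" and r :: real
  show "(a + a') *v b = a *v b + a' *v b" by (rule matrix_vector_mult_add_rdistrib)
  show "a *v (b + b') = a *v b + a *v b'" by (rule matrix_vector_right_distrib)
  show "(r *\<^sub>R a) *v b = r *\<^sub>R (a *v b)"
    by (simp add: matrix_vector_mult_def vec_eq_iff sum_distrib_left mult_ac)
  show "a *v (r *\<^sub>R b) = r *\<^sub>R (a *v b)" by (rule matrix_vector_mult_scaleR)
  show "\<exists>K. \<forall>a b. norm ((a::real^'n^'m) *v (b::real^'n)) \<le> norm a * norm b * K"
    using norm_matrix_vector_mult_le by (metis mult.right_neutral)
qed

lemma bounded_linear_transpose: "bounded_linear (transpose :: real^'n^'m \<Rightarrow> real^'m^'n)"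
  by (rule linear_conv_bounded_linear[THEN iffD1]) (auto intro!: linearI simp: transpose_def vec_eq_iff)

lemma continuous_on_det: "continuous_on S (\<lambda>x. det (f x :: real^'n^'n))" if "continuous_on S f"
  unfolding det_def by (intro continuous_intros that)

lemma rotation_matrix_inner:
  fixes F :: "real^'n^'n"
  assumes "rotation_matrix F" shows "(F *v a) \<bullet> (F *v b) = a \<bullet> b"
proof -
  have "orthogonal_transformation (\<lambda>x. F *v x)"
    using assms orthogonal_transformation_matrix[of "\<lambda>x. F *v x"]
    by (simp add: rotation_matrix_def matrix_vector_mul_linear)
  then show ?thesis by (simp add: orthogonal_transformation_def)
qed

lemmas has_vector_derivative_matrix_mult =
  bounded_bilinear.has_vector_derivative[OF bounded_bilinear_matrix_mult]
lemmas has_vector_derivative_matrix_vector_mult =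
  bounded_bilinear.has_vector_derivative[OF bounded_bilinear_matrix_vector_mult]
lemmas matrix_mult_diff_left = bounded_bilinear.diff_left[OF bounded_bilinear_matrix_mult]
lemmas matrix_mult_diff_right = bounded_bilinear.diff_right[OF bounded_bilinear_matrix_mult]
lemmas matrix_mult_minus_left = bounded_bilinear.minus_left[OF bounded_bilinear_matrix_mult]
lemmas matrix_mult_minus_right = bounded_bilinear.minus_right[OF bounded_bilinear_matrix_mult]
lemmas matrix_mult_add_left = bounded_bilinear.add_left[OF bounded_bilinear_matrix_mult]
lemmas matrix_mult_algebra = matrix_mult_add_left matrix_add_ldistrib matrix_mult_diff_left
  matrix_mult_diff_right matrix_mult_minus_left matrix_mult_minus_right matrix_mul_assoc

lemma continuous_on_matrix_mult_uncurried:
  "continuous_on UNIV (\<lambda>(x, y). f x y) \<Longrightarrow> continuous_on UNIV (\<lambda>(x, y). g x y) \<Longrightarrow>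
   continuous_on UNIV (\<lambda>(x, y). (f x y :: real^'n^'m) ** (g x y :: real^'k^'n))"
  using bounded_bilinear.continuous_on[OF bounded_bilinear_matrix_mult,
      of UNIV "\<lambda>(x, y). f x y" "\<lambda>(x, y). g x y"]
  by (simp add: case_prod_unfold)

section \<open>Integrals from \<open>0\<close> depending on a parameter\<close>

text \<open>\<open>integral_from0 f y = \<integral>\<^sub>0\<^sup>y f\<close> for either sign of \<open>y\<close>; the substituted form over \<open>[0, 1]\<close>
  makes continuity and differentiation in a parameter of \<open>f\<close> a matter of the library's
  results for integrals over a fixed interval.\<close>

definition integral_from0 :: "(real \<Rightarrow> 'a::euclidean_space) \<Rightarrow> real \<Rightarrow> 'a" where
  "integral_from0 f y = y *\<^sub>R integral {0..1} (\<lambda>t. f (t * y))"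

lemma integral_from0_0 [simp]: "integral_from0 f 0 = 0"
  by (simp add: integral_from0_def)

lemma integral_from0_eq:
  assumes f: "continuous_on UNIV f" and a: "a \<le> 0" "a \<le> y"
  shows "integral_from0 f y = integral {a..y} f - integral {a..0} f"
proof -
  have int: "f integrable_on {a..b}" for b
    using f by (intro integrable_continuous_real) (rule continuous_on_subset, auto)
  have "((\<lambda>t. y *\<^sub>R f (t * y)) has_integral (integral {0 * y..1 * y} f - integral {1 * y..0 * y} f)) {0..1}"
  proof (rule has_integral_substitution_general[where s="{}" and c="-\<bar>y\<bar>" and d="\<bar>y\<bar>"])
    have "\<bar>t * y\<bar> \<le> \<bar>y\<bar>" if "t \<in> {0..1}" for t
      using that by (simp add: abs_mult mult_left_le_one_le)
    then show "(\<lambda>t. t * y) ` {0..1} \<subseteq> {- \<bar>y\<bar>..\<bar>y\<bar>}"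
      by (force simp: abs_le_iff)
    show "continuous_on {- \<bar>y\<bar>..\<bar>y\<bar>} f" using f by (rule continuous_on_subset) auto
  qed (auto intro!: continuous_intros derivative_eq_intros)
  then have "integral {0..1} (\<lambda>t. y *\<^sub>R f (t * y)) = integral {0..y} f - integral {y..0} f"
    by (intro integral_unique) simp
  then have sub: "integral_from0 f y = integral {0..y} f - integral {y..0} f"
    by (simp add: integral_from0_def)
  show ?thesis
  proof (cases "0 \<le> y")
    case True
    then have "integral {a..0} f + integral {0..y} f = integral {a..y} f"
      using a int by (intro Henstock_Kurzweil_Integration.integral_combine) auto
    moreover have "integral {y..0} f = 0"
      using True by (cases "y = 0") auto
    ultimately show ?thesis using sub by (simp add: algebra_simps)
  next
    case False
    then have "integral {a..y} f + integral {y..0} f = integral {a..0} f"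
      using a int by (intro Henstock_Kurzweil_Integration.integral_combine) auto
    then show ?thesis using sub False by (simp add: algebra_simps)
  qed
qed

lemma has_vector_derivative_integral_from0:
  assumes f: "continuous_on UNIV f"
  shows "(integral_from0 f has_vector_derivative f y) (at y)"
proof -
  define a where "a = min 0 y - 1"
  have "((\<lambda>u. integral {a..u} f) has_vector_derivative f y) (at y within {a..y+1})"
    by (rule integral_has_vector_derivative) (use f continuous_on_subset a_def in auto)
  moreover have "at y within {a..y+1} = at y"
    by (rule at_within_interior) (simp add: a_def)
  ultimately have "((\<lambda>u. integral {a..u} f - integral {a..0} f) has_vector_derivative f y) (at y)"
    by (auto intro!: derivative_eq_intros)
  then show ?thesis
  proof (rule has_vector_derivative_transform_within_open[where S="{a<..}"])
    show "integral {a..u} f - integral {a..0} f = integral_from0 f u" if "u \<in> {a<..}" for u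
      using that by (intro integral_from0_eq[OF f, symmetric]) (auto simp: a_def)
  qed (auto simp: a_def)
qed

lemma continuous_on_integral_from0_param:
  assumes g: "continuous_on UNIV (\<lambda>(x, y). g x y)"
  shows "continuous_on UNIV (\<lambda>(x, y). integral_from0 (g x) y)"
proof -
  have "continuous_on (UNIV \<times> cbox 0 1) (\<lambda>(p, t). g (fst p) (t * snd p))"
    by (auto simp: case_prod_unfold intro!: continuous_on_compose_uncurried[OF g] continuous_intros)
  from integral_continuous_on_param[OF this]
  have "continuous_on UNIV (\<lambda>p. snd p *\<^sub>R integral {0..1} (\<lambda>t. g (fst p) (t * snd p)))"
    by (auto intro!: continuous_intros)
  then show ?thesis by (simp add: integral_from0_def case_prod_unfold)
qed

lemma has_vector_derivative_integral_from0_param: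
  assumes gx: "\<And>x t. ((\<lambda>x. g x t) has_vector_derivative gx x t) (at x)"
    and c: "continuous_on UNIV (\<lambda>(x, y). gx x y)"
    and g: "continuous_on UNIV (\<lambda>(x, y). g x y)"
  shows "((\<lambda>x. integral_from0 (g x) y) has_vector_derivative integral_from0 (gx x) y) (at x)"
proof -
  have "continuous_on (UNIV \<times> cbox 0 1) (\<lambda>(x, t). gx x (t * y))"
    by (auto simp: case_prod_unfold intro!: continuous_on_compose_uncurried[OF c] continuous_intros)
  moreover have "(\<lambda>t. g x (t * y)) integrable_on cbox 0 1" for x
    by (auto intro!: integrable_continuous_real continuous_on_compose_uncurried[OF g] continuous_intros)
  ultimately have "((\<lambda>x. integral (cbox 0 1) (\<lambda>t. g x (t * y))) has_vector_derivative
      integral (cbox 0 1) (\<lambda>t. gx x (t * y))) (at x within UNIV)"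
    by (intro leibniz_rule_vector_derivative) (auto intro: gx)
  then show ?thesis
    unfolding integral_from0_def by (auto intro!: derivative_eq_intros)
qed

lemma has_integral_power_01: "((\<lambda>t::real. t ^ n) has_integral 1 / Suc n) {0..1}"
proof -
  have "((\<lambda>t::real. t ^ n) has_integral 1 ^ Suc n / Suc n - 0 ^ Suc n / Suc n) {0..1}"
  proof (rule fundamental_theorem_of_calculus)
    fix x :: real
    have "((\<lambda>t. t ^ Suc n / Suc n) has_real_derivative (1 + real n) * (1 * x ^ n) / Suc n) (at x within {0..1})"
      by (intro DERIV_cdivide DERIV_power_Suc DERIV_ident)
    then show "((\<lambda>t. t ^ Suc n / Suc n) has_vector_derivative x ^ n) (at x within {0..1})"
      by (simp add: has_real_derivative_iff_has_vector_derivative[symmetric])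
  qed simp
  then show ?thesis by simp
qed

lemma norm_integral_from0_le:
  assumes f: "continuous_on UNIV f"
    and b: "\<And>t. t \<in> {0..1} \<Longrightarrow> norm (f (t * y)) \<le> K * (t * \<bar>y\<bar>) ^ n / fact n"
  shows "norm (integral_from0 f y) \<le> K * \<bar>y\<bar> ^ Suc n / fact (Suc n)"
proof -
  define L where "L = K * \<bar>y\<bar> ^ n / fact n"
  have "(\<lambda>t. f (t * y)) integrable_on {0..1}"
    by (auto intro!: integrable_continuous_real continuous_on_compose2[OF f] continuous_intros)
  moreover have maj: "((\<lambda>t. L * t ^ n) has_integral L * (1 / Suc n)) {0..1}"
    by (intro has_integral_mult_right has_integral_power_01)
  ultimately have "norm (integral {0..1} (\<lambda>t. f (t * y))) \<le> integral {0..1} (\<lambda>t. L * t ^ n)"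
    using b by (intro integral_norm_bound_integral) (auto simp: L_def power_mult_distrib mult_ac)
  then have "\<bar>y\<bar> * norm (integral {0..1} (\<lambda>t. f (t * y))) \<le> \<bar>y\<bar> * (L * (1 / Suc n))"
    using integral_unique[OF maj] by (intro mult_left_mono) auto
  then show ?thesis by (simp add: integral_from0_def L_def field_simps)
qed

lemma has_vector_derivative_suminf:
  fixes f :: "nat \<Rightarrow> real \<Rightarrow> 'a::banach"
  assumes d: "\<And>n x. x \<in> {a<..<b} \<Longrightarrow> (f n has_vector_derivative f' n x) (at x)"
    and bd: "\<And>n x. x \<in> {a<..<b} \<Longrightarrow> norm (f' n x) \<le> M n" and M: "summable M"
    and sf: "\<And>x. x \<in> {a<..<b} \<Longrightarrow> summable (\<lambda>n. f n x)"
    and x0: "x0 \<in> {a<..<b}"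
  shows "((\<lambda>x. \<Sum>n. f n x) has_vector_derivative (\<Sum>n. f' n x0)) (at x0)"
proof -
  define S where "S = {a<..<b}"
  have ul: "uniform_limit S (\<lambda>n x. \<Sum>i<n. f' i x) (\<lambda>x. \<Sum>i. f' i x) sequentially"
    unfolding S_def by (rule Weierstrass_m_test[OF bd M])
  have "\<exists>g. \<forall>x\<in>S. (\<lambda>n. f n x) sums g x \<and> (g has_derivative (\<lambda>h. h *\<^sub>R (\<Sum>i. f' i x))) (at x within S)"
  proof (rule has_derivative_series[where x=x0])
    show "(f n has_derivative (\<lambda>h. h *\<^sub>R f' n x)) (at x within S)" if "x \<in> S" for n x
      using d[of x n] that by (auto simp: S_def has_vector_derivative_def intro: has_derivative_at_withinI)
    show "\<forall>\<^sub>F n in sequentially. \<forall>x\<in>S. \<forall>h. norm ((\<Sum>i<n. h *\<^sub>R f' i x) - h *\<^sub>R (\<Sum>i. f' i x)) \<le> e * norm h"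
      if "e > 0" for e
    proof -
      from that ul have "\<forall>\<^sub>F n in sequentially. \<forall>x\<in>S. norm ((\<Sum>i<n. f' i x) - (\<Sum>i. f' i x)) < e"
        unfolding uniform_limit_iff dist_norm by blast
      then have "\<forall>\<^sub>F n in sequentially. \<forall>x\<in>S. norm ((\<Sum>i<n. f' i x) - (\<Sum>i. f' i x)) \<le> e"
        by (auto elim!: eventually_mono intro: less_imp_le)
      then show ?thesis
        by eventually_elim
          (auto simp: scaleR_sum_right[symmetric] scaleR_diff_right[symmetric] mult.commute[of e]
            intro!: mult_left_mono)
    qed
  qed (use sf[OF x0] x0 in \<open>auto simp: S_def summable_sums\<close>)
  then obtain g where g: "\<And>x. x \<in> S \<Longrightarrow> (\<lambda>n. f n x) sums g x"
    "\<And>x. x \<in> S \<Longrightarrow> (g has_derivative (\<lambda>h. h *\<^sub>R (\<Sum>i. f' i x))) (at x within S)" by blast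
  have "at x0 within S = at x0"
    using x0 by (intro at_within_interior) (simp add: S_def)
  with g(2)[of x0] x0 have "(g has_vector_derivative (\<Sum>i. f' i x0)) (at x0)"
    by (simp add: S_def has_vector_derivative_def)
  then show ?thesis
    by (rule has_vector_derivative_transform_within_open[where S=S])
      (use x0 g(1) in \<open>auto simp: S_def sums_iff\<close>)
qed

lemma continuous_on_suminf_square_bounded:
  fixes f :: "nat \<Rightarrow> real \<Rightarrow> real \<Rightarrow> 'a::banach"
  assumes c: "\<And>n. continuous_on UNIV (\<lambda>(x, y). f n x y)"
    and b: "\<And>R. \<exists>m. summable m \<and> (\<forall>n x y. \<bar>x\<bar> \<le> R \<longrightarrow> \<bar>y\<bar> \<le> R \<longrightarrow> norm (f n x y) \<le> m n)"
  shows "continuous_on UNIV (\<lambda>(x, y). \<Sum>n. f n x y)"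
proof -
  have "isCont (\<lambda>p. \<Sum>n. f n (fst p) (snd p)) p" for p
  proof -
    define R where "R = \<bar>fst p\<bar> + \<bar>snd p\<bar> + 1"
    define S where "S = {-R<..<R} \<times> {-R<..<R}"
    obtain m where m: "summable m" "\<And>n x y. \<bar>x\<bar> \<le> R \<Longrightarrow> \<bar>y\<bar> \<le> R \<Longrightarrow> norm (f n x y) \<le> m n"
      using b[of R] by blast
    have "uniform_limit S (\<lambda>n q. \<Sum>i<n. f i (fst q) (snd q)) (\<lambda>q. \<Sum>i. f i (fst q) (snd q)) sequentially"
      by (rule Weierstrass_m_test[OF _ m(1)]) (auto simp: S_def intro!: m(2))
    then have "continuous_on S (\<lambda>q. \<Sum>i. f i (fst q) (snd q))"
      by (rule uniform_limit_theorem[rotated])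
        (use c in \<open>auto intro!: always_eventually continuous_on_sum simp: case_prod_unfold
            intro: continuous_on_subset\<close>)
    moreover have "open S" "p \<in> S" by (cases p; auto simp: S_def R_def intro!: open_Times)+
    ultimately show ?thesis by (simp add: continuous_on_eq_continuous_at)
  qed
  then show ?thesis
    by (simp add: case_prod_unfold continuous_at_imp_continuous_on)
qed

section \<open>Linear matrix equations with a parameter\<close>

lemma summable_exp_majorant: "summable (\<lambda>n. c * (z::real) ^ n / fact n)"
  using summable_mult[OF summable_exp[of z], of c] by (simp add: field_simps)

text \<open>The linear system \<open>\<partial>\<^sub>y Y = Y B(x, y)\<close>, \<open>Y(x, 0) = 1\<close>, solved by Picard iteration
  simultaneously with its derivative in the parameter \<open>x\<close>.\<close>

locale matrix_ode_family =
  fixes B Bx :: "real \<Rightarrow> real \<Rightarrow> real^'n^'n"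
  assumes continuous_B: "continuous_on UNIV (\<lambda>(x, y). B x y)"
    and continuous_Bx: "continuous_on UNIV (\<lambda>(x, y). Bx x y)"
    and B_has_derivative_x: "\<And>x y. ((\<lambda>x. B x y) has_vector_derivative Bx x y) (at x)"
begin

fun picard :: "nat \<Rightarrow> real \<Rightarrow> real \<Rightarrow> real^'n^'n" where
  "picard 0 x y = mat 1"
| "picard (Suc n) x y = integral_from0 (\<lambda>s. picard n x s ** B x s) y"

fun picard_dx :: "nat \<Rightarrow> real \<Rightarrow> real \<Rightarrow> real^'n^'n" where
  "picard_dx 0 x y = 0"
| "picard_dx (Suc n) x y = integral_from0 (\<lambda>s. picard_dx n x s ** B x s + picard n x s ** Bx x s) y"

lemma picard_regular:
  "continuous_on UNIV (\<lambda>(x, y). picard n x y) \<and> continuous_on UNIV (\<lambda>(x, y). picard_dx n x y) \<and>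
   (\<forall>x y. ((\<lambda>x. picard n x y) has_vector_derivative picard_dx n x y) (at x))"
proof (induction n)
  case 0
  then show ?case by (auto intro!: continuous_intros derivative_eq_intros)
next
  case (Suc n)
  then have cP: "continuous_on UNIV (\<lambda>(x, y). picard n x y)"
    and cQ: "continuous_on UNIV (\<lambda>(x, y). picard_dx n x y)"
    and dP: "\<And>x y. ((\<lambda>x. picard n x y) has_vector_derivative picard_dx n x y) (at x)" by auto
  have c1: "continuous_on UNIV (\<lambda>(x, y). picard n x y ** B x y)"
    by (rule continuous_on_matrix_mult_uncurried[OF cP continuous_B])
  have c2: "continuous_on UNIV (\<lambda>(x, y). picard_dx n x y ** B x y + picard n x y ** Bx x y)"
    by (intro continuous_on_add_uncurried continuous_on_matrix_mult_uncurried cP cQ continuous_B continuous_Bx)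
  have "((\<lambda>x. picard n x s ** B x s) has_vector_derivative
      picard_dx n x s ** B x s + picard n x s ** Bx x s) (at x)" for x s
    using has_vector_derivative_matrix_mult[OF dP B_has_derivative_x] by (simp add: add.commute)
  from has_vector_derivative_integral_from0_param[OF this c2 c1]
    continuous_on_integral_from0_param[OF c1] continuous_on_integral_from0_param[OF c2]
  show ?case by simp
qed

lemma continuous_on_picard: "continuous_on UNIV (\<lambda>(x, y). picard n x y)"
  and continuous_on_picard_dx: "continuous_on UNIV (\<lambda>(x, y). picard_dx n x y)"
  and picard_has_derivative_x: "((\<lambda>x. picard n x y) has_vector_derivative picard_dx n x y) (at x)"
  using picard_regular by blast+

lemma continuous_on_picard_integrand: "continuous_on UNIV (\<lambda>s. picard n x s ** B x s)"
  and continuous_on_picard_dx_integrand: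
    "continuous_on UNIV (\<lambda>s. picard_dx n x s ** B x s + picard n x s ** Bx x s)"
  by (intro continuous_on_compose_uncurried[where g="\<lambda>x y. picard n x y ** B x y"]
        continuous_on_compose_uncurried[where g="\<lambda>x y. picard_dx n x y ** B x y + picard n x y ** Bx x y"]
        continuous_on_matrix_mult_uncurried continuous_on_add_uncurried continuous_intros
        continuous_on_picard continuous_on_picard_dx continuous_B continuous_Bx)+

lemma picard_Suc_has_derivative_y:
  "((\<lambda>y. picard (Suc n) x y) has_vector_derivative picard n x y ** B x y) (at y)"
  using has_vector_derivative_integral_from0[OF continuous_on_picard_integrand] by simp

lemma picard_dx_Suc_has_derivative_y:
  "((\<lambda>y. picard_dx (Suc n) x y) has_vector_derivative
     picard_dx n x y ** B x y + picard n x y ** Bx x y) (at y)"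
  using has_vector_derivative_integral_from0[OF continuous_on_picard_dx_integrand] by simp

lemma coefficients_bounded_on_square:
  obtains M where "0 \<le> M" "\<And>x y. \<bar>x\<bar> \<le> R \<Longrightarrow> \<bar>y\<bar> \<le> R \<Longrightarrow> norm (B x y) \<le> M \<and> norm (Bx x y) \<le> M"
proof -
  have "compact ({-R..R} \<times> {-R..R})" by (intro compact_Times compact_Icc)
  then have "bounded ((\<lambda>(x, y). B x y) ` ({-R..R} \<times> {-R..R}))"
    "bounded ((\<lambda>(x, y). Bx x y) ` ({-R..R} \<times> {-R..R}))"
    by (auto intro!: compact_imp_bounded compact_continuous_image
        continuous_on_subset[OF continuous_B] continuous_on_subset[OF continuous_Bx])
  then obtain a b where a: "\<forall>p\<in>{-R..R} \<times> {-R..R}. norm ((\<lambda>(x, y). B x y) p) \<le> a"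
    and b: "\<forall>p\<in>{-R..R} \<times> {-R..R}. norm ((\<lambda>(x, y). Bx x y) p) \<le> b"
    unfolding bounded_iff by blast
  then show ?thesis
  proof (intro that[of "max 0 (max a b)"])
    fix x y assume "\<bar>x\<bar> \<le> R" "\<bar>y\<bar> \<le> R"
    then have "(x, y) \<in> {-R..R} \<times> {-R..R}" by auto
    with a b have "norm (B x y) \<le> a" "norm (Bx x y) \<le> b" by (metis case_prod_conv)+
    then show "norm (B x y) \<le> max 0 (max a b) \<and> norm (Bx x y) \<le> max 0 (max a b)"
      by linarith
  qed simp
qed

lemma picard_bounds:
  assumes M: "0 \<le> M" "\<And>x y. \<bar>x\<bar> \<le> R \<Longrightarrow> \<bar>y\<bar> \<le> R \<Longrightarrow> norm (B x y) \<le> M \<and> norm (Bx x y) \<le> M"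
    and x: "\<bar>x\<bar> \<le> R"
  shows "\<bar>y\<bar> \<le> R \<Longrightarrow> norm (picard n x y) \<le> norm (mat 1 :: real^'n^'n) * (M * \<bar>y\<bar>) ^ n / fact n \<and>
    norm (picard_dx n x y) \<le> norm (mat 1 :: real^'n^'n) * n * (M * \<bar>y\<bar>) ^ n / fact n"
proof (induction n arbitrary: y)
  case 0
  then show ?case by simp
next
  case (Suc n)
  define c where "c = norm (mat 1 :: real^'n^'n)"
  define p where "p t = c * M ^ n * (t * \<bar>y\<bar>) ^ n / fact n" for t
  have c: "c \<ge> 0" by (simp add: c_def)
  have IH: "norm (picard n x (t * y)) \<le> p t \<and> norm (picard_dx n x (t * y)) \<le> n * p t"
    and BM: "norm (B x (t * y)) \<le> M \<and> norm (Bx x (t * y)) \<le> M" if t: "t \<in> {0..1}" for t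
  proof -
    have ty: "\<bar>t * y\<bar> = t * \<bar>y\<bar>" "\<bar>t * y\<bar> \<le> R" using t Suc.prems
      by (auto simp: abs_mult intro: order_trans[OF mult_left_le_one_le])
    show "norm (B x (t * y)) \<le> M \<and> norm (Bx x (t * y)) \<le> M" using M(2)[OF x ty(2)] .
    show "norm (picard n x (t * y)) \<le> p t \<and> norm (picard_dx n x (t * y)) \<le> n * p t"
      using Suc.IH[OF ty(2)] unfolding ty(1) by (simp add: p_def c_def power_mult_distrib mult_ac)
  qed
  have "norm (picard (Suc n) x y) \<le> (c * M ^ Suc n) * \<bar>y\<bar> ^ Suc n / fact (Suc n)"
    unfolding picard.simps
  proof (rule norm_integral_from0_le[OF continuous_on_picard_integrand])
    fix t :: real assume t: "t \<in> {0..1}"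
    have "norm (picard n x (t * y) ** B x (t * y)) \<le> p t * M"
      using IH[OF t] BM[OF t] c M(1) t
      by (intro order_trans[OF norm_matrix_mult_le] mult_mono) (auto simp: p_def)
    then show "norm (picard n x (t * y) ** B x (t * y)) \<le> (c * M ^ Suc n) * (t * \<bar>y\<bar>) ^ n / fact n"
      by (simp add: p_def field_simps)
  qed
  moreover have "norm (picard_dx (Suc n) x y) \<le> (c * Suc n * M ^ Suc n) * \<bar>y\<bar> ^ Suc n / fact (Suc n)"
    unfolding picard_dx.simps
  proof (rule norm_integral_from0_le[OF continuous_on_picard_dx_integrand])
    fix t :: real assume t: "t \<in> {0..1}"
    have "norm (picard_dx n x (t * y) ** B x (t * y) + picard n x (t * y) ** Bx x (t * y))
        \<le> n * p t * M + p t * M"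
      using IH[OF t] BM[OF t] c M(1) t
      by (intro order_trans[OF norm_triangle_ineq] add_mono order_trans[OF norm_matrix_mult_le] mult_mono)
        (auto simp: p_def)
    then show "norm (picard_dx n x (t * y) ** B x (t * y) + picard n x (t * y) ** Bx x (t * y))
        \<le> (c * Suc n * M ^ Suc n) * (t * \<bar>y\<bar>) ^ n / fact n"
      by (simp add: p_def field_simps)
  qed
  ultimately show ?case by (simp add: c_def power_mult_distrib mult_ac)
qed

lemma picard_majorants:
  assumes M: "0 \<le> M" "\<And>x y. \<bar>x\<bar> \<le> R \<Longrightarrow> \<bar>y\<bar> \<le> R \<Longrightarrow> norm (B x y) \<le> M \<and> norm (Bx x y) \<le> M"
    and xy: "\<bar>x\<bar> \<le> R" "\<bar>y\<bar> \<le> R"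
  shows "norm (picard n x y) \<le> norm (mat 1 :: real^'n^'n) * (M * R) ^ n / fact n"
    "norm (picard_dx n x y) \<le> norm (mat 1 :: real^'n^'n) * (2 * (M * R)) ^ n / fact n"
proof -
  define c where "c = norm (mat 1 :: real^'n^'n)"
  have c: "c \<ge> 0" by (simp add: c_def)
  have pw: "(M * \<bar>y\<bar>) ^ n \<le> (M * R) ^ n"
    using M(1) xy by (intro power_mono mult_left_mono) auto
  note b = picard_bounds[OF M xy(1) xy(2), of n, folded c_def]
  have "norm (picard n x y) \<le> c * (M * \<bar>y\<bar>) ^ n / fact n" using b by simp
  also have "\<dots> \<le> c * (M * R) ^ n / fact n"
    using pw c by (intro divide_right_mono mult_left_mono) auto
  finally show "norm (picard n x y) \<le> norm (mat 1 :: real^'n^'n) * (M * R) ^ n / fact n"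
    by (simp add: c_def)
  have "real n \<le> 2 ^ n"
    by (metis less_exp less_imp_le of_nat_le_iff of_nat_numeral of_nat_power)
  then have "c * n * (M * \<bar>y\<bar>) ^ n / fact n \<le> c * (2 ^ n * (M * R) ^ n) / fact n"
    using pw c M(1) by (intro divide_right_mono) (auto simp: mult.assoc intro!: mult_left_mono mult_mono)
  with b show "norm (picard_dx n x y) \<le> norm (mat 1 :: real^'n^'n) * (2 * (M * R)) ^ n / fact n"
    by (simp add: c_def power_mult_distrib)
qed

definition sol :: "real \<Rightarrow> real \<Rightarrow> real^'n^'n" where "sol x y = (\<Sum>n. picard n x y)"
definition sol_dx :: "real \<Rightarrow> real \<Rightarrow> real^'n^'n" where "sol_dx x y = (\<Sum>n. picard_dx n x y)"

lemma picard_summable_majorants: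
  "\<exists>m. summable m \<and> (\<forall>n x y. \<bar>x\<bar> \<le> R \<longrightarrow> \<bar>y\<bar> \<le> R \<longrightarrow> norm (picard n x y) \<le> m n)"
  "\<exists>m. summable m \<and> (\<forall>n x y. \<bar>x\<bar> \<le> R \<longrightarrow> \<bar>y\<bar> \<le> R \<longrightarrow> norm (picard_dx n x y) \<le> m n)"
proof -
  obtain M where M: "0 \<le> M" "\<And>x y. \<bar>x\<bar> \<le> R \<Longrightarrow> \<bar>y\<bar> \<le> R \<Longrightarrow> norm (B x y) \<le> M \<and> norm (Bx x y) \<le> M"
    using coefficients_bounded_on_square by blast
  show "\<exists>m. summable m \<and> (\<forall>n x y. \<bar>x\<bar> \<le> R \<longrightarrow> \<bar>y\<bar> \<le> R \<longrightarrow> norm (picard n x y) \<le> m n)"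
    by (intro exI[of _ "\<lambda>n. norm (mat 1 :: real^'n^'n) * (M * R) ^ n / fact n"] conjI allI impI
        summable_exp_majorant picard_majorants(1)[OF M])
  show "\<exists>m. summable m \<and> (\<forall>n x y. \<bar>x\<bar> \<le> R \<longrightarrow> \<bar>y\<bar> \<le> R \<longrightarrow> norm (picard_dx n x y) \<le> m n)"
    by (intro exI[of _ "\<lambda>n. norm (mat 1 :: real^'n^'n) * (2 * (M * R)) ^ n / fact n"] conjI allI impI
        summable_exp_majorant picard_majorants(2)[OF M])
qed

lemma summable_picard: "summable (\<lambda>n. picard n x y)"
  and summable_picard_dx: "summable (\<lambda>n. picard_dx n x y)"
proof -
  define R where "R = max \<bar>x\<bar> \<bar>y\<bar>"
  have xy: "\<bar>x\<bar> \<le> R" "\<bar>y\<bar> \<le> R" by (auto simp: R_def)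
  obtain m where "summable m" "\<And>n. norm (picard n x y) \<le> m n"
    using picard_summable_majorants(1)[of R] xy by blast
  then show "summable (\<lambda>n. picard n x y)" by (rule summable_comparison_test')
  obtain m' where "summable m'" "\<And>n. norm (picard_dx n x y) \<le> m' n"
    using picard_summable_majorants(2)[of R] xy by blast
  then show "summable (\<lambda>n. picard_dx n x y)" by (rule summable_comparison_test')
qed

lemma continuous_on_sol: "continuous_on UNIV (\<lambda>(x, y). sol x y)"
  unfolding sol_def
  by (intro continuous_on_suminf_square_bounded continuous_on_picard picard_summable_majorants)

lemma sol_0: "sol x 0 = mat 1"
proof -
  have "(\<lambda>n. picard n x 0) = (\<lambda>n. if n = 0 then mat 1 else 0)"
    by (rule ext) (case_tac n, auto)
  then have "(\<lambda>n. picard n x 0) sums mat 1"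
    using sums_single[of 0 "\<lambda>n. mat 1"] by simp
  then show ?thesis by (simp add: sol_def sums_iff)
qed

lemma sol_dx_0: "sol_dx x 0 = 0"
proof -
  have "picard_dx n x 0 = 0" for n by (cases n) auto
  then show ?thesis by (simp add: sol_dx_def)
qed

lemma sol_has_derivative_x: "((\<lambda>x. sol x y) has_vector_derivative sol_dx x0 y) (at x0)"
proof -
  define R where "R = \<bar>x0\<bar> + \<bar>y\<bar> + 1"
  obtain m where m: "summable m" "\<And>n x y. \<bar>x\<bar> \<le> R \<Longrightarrow> \<bar>y\<bar> \<le> R \<Longrightarrow> norm (picard_dx n x y) \<le> m n"
    using picard_summable_majorants(2)[of R] by blast
  have "((\<lambda>x. \<Sum>n. picard n x y) has_vector_derivative (\<Sum>n. picard_dx n x0 y)) (at x0)"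
    by (rule has_vector_derivative_suminf[where a="-R" and b=R and M=m])
      (auto simp: R_def intro!: picard_has_derivative_x m summable_picard)
  then show ?thesis by (simp add: sol_def sol_dx_def)
qed

lemma sol_has_derivative_y: "((\<lambda>y. sol x y) has_vector_derivative sol x y0 ** B x y0) (at y0)"
proof -
  define R where "R = \<bar>x\<bar> + \<bar>y0\<bar> + 1"
  obtain M where M: "0 \<le> M" "\<And>x y. \<bar>x\<bar> \<le> R \<Longrightarrow> \<bar>y\<bar> \<le> R \<Longrightarrow> norm (B x y) \<le> M \<and> norm (Bx x y) \<le> M"
    using coefficients_bounded_on_square by blast
  define m where "m n = norm (mat 1 :: real^'n^'n) * (M * R) ^ n / fact n * M" for n
  have "((\<lambda>y. \<Sum>n. picard (Suc n) x y) has_vector_derivative (\<Sum>n. picard n x y0 ** B x y0)) (at y0)"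
  proof (rule has_vector_derivative_suminf[where a="-R" and b=R and M=m])
    show "norm (picard n x y ** B x y) \<le> m n" if "y \<in> {-R<..<R}" for n y
    proof -
      have xy: "\<bar>x\<bar> \<le> R" "\<bar>y\<bar> \<le> R" using that by (auto simp: R_def)
      show ?thesis unfolding m_def
        using picard_majorants(1)[OF M xy, of n] M(2)[OF xy] M(1)
        by (intro order_trans[OF norm_matrix_mult_le] mult_mono) (auto simp: R_def)
    qed
    show "summable m"
      unfolding m_def by (intro summable_mult2 summable_exp_majorant)
    show "summable (\<lambda>n. picard (Suc n) x y)" for y
      by (rule iffD2[OF summable_Suc_iff summable_picard])
    show "((\<lambda>y. picard (Suc n) x y) has_vector_derivative picard n x y ** B x y) (at y)" for n y
      by (rule picard_Suc_has_derivative_y)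
    show "y0 \<in> {-R<..<R}" by (auto simp: R_def)
  qed
  moreover have "(\<Sum>n. picard n x y0 ** B x y0) = sol x y0 ** B x y0"
    unfolding sol_def
    by (rule bounded_linear.suminf[OF bounded_bilinear.bounded_linear_left[OF bounded_bilinear_matrix_mult]
          summable_picard, symmetric])
  moreover have "sol x = (\<lambda>y. mat 1 + (\<Sum>n. picard (Suc n) x y))"
    using suminf_split_head[OF summable_picard] by (auto simp: sol_def fun_eq_iff)
  ultimately show ?thesis
    by (auto intro!: derivative_eq_intros)
qed

lemma sol_dx_has_derivative_y:
  "((\<lambda>y. sol_dx x y) has_vector_derivative sol_dx x y0 ** B x y0 + sol x y0 ** Bx x y0) (at y0)"
proof -
  define R where "R = \<bar>x\<bar> + \<bar>y0\<bar> + 1"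
  obtain M where M: "0 \<le> M" "\<And>x y. \<bar>x\<bar> \<le> R \<Longrightarrow> \<bar>y\<bar> \<le> R \<Longrightarrow> norm (B x y) \<le> M \<and> norm (Bx x y) \<le> M"
    using coefficients_bounded_on_square by blast
  define c where "c = norm (mat 1 :: real^'n^'n)"
  define m where "m n = c * (2 * (M * R)) ^ n / fact n * M + c * (M * R) ^ n / fact n * M" for n
  note right_mult = bounded_bilinear.bounded_linear_left[OF bounded_bilinear_matrix_mult]
  have "((\<lambda>y. \<Sum>n. picard_dx (Suc n) x y) has_vector_derivative
      (\<Sum>n. picard_dx n x y0 ** B x y0 + picard n x y0 ** Bx x y0)) (at y0)"
  proof (rule has_vector_derivative_suminf[where a="-R" and b=R and M=m])
    show "norm (picard_dx n x y ** B x y + picard n x y ** Bx x y) \<le> m n" if "y \<in> {-R<..<R}" for n y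
    proof -
      have xy: "\<bar>x\<bar> \<le> R" "\<bar>y\<bar> \<le> R" using that by (auto simp: R_def)
      show ?thesis unfolding m_def
        using picard_majorants[OF M xy, of n, folded c_def] M(2)[OF xy] M(1)
        by (intro order_trans[OF norm_triangle_ineq] add_mono order_trans[OF norm_matrix_mult_le]
            mult_mono) (auto simp: R_def c_def)
    qed
    show "summable m"
      unfolding m_def by (intro summable_add summable_mult2 summable_exp_majorant)
    show "summable (\<lambda>n. picard_dx (Suc n) x y)" for y
      by (rule iffD2[OF summable_Suc_iff summable_picard_dx])
    show "((\<lambda>y. picard_dx (Suc n) x y) has_vector_derivative
        picard_dx n x y ** B x y + picard n x y ** Bx x y) (at y)" for n y
      by (rule picard_dx_Suc_has_derivative_y)
    show "y0 \<in> {-R<..<R}" by (auto simp: R_def)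
  qed
  moreover have "(\<Sum>n. picard_dx n x y0 ** B x y0 + picard n x y0 ** Bx x y0) =
      sol_dx x y0 ** B x y0 + sol x y0 ** Bx x y0"
    unfolding sol_def sol_dx_def
    by (simp add: suminf_add[symmetric] bounded_linear.summable[OF right_mult] summable_picard
        summable_picard_dx bounded_linear.suminf[OF right_mult])
  moreover have "sol_dx x = (\<lambda>y. \<Sum>n. picard_dx (Suc n) x y)"
    using suminf_split_head[OF summable_picard_dx] by (auto simp: sol_dx_def fun_eq_iff)
  ultimately show ?thesis by simp
qed

end

section \<open>Skew-symmetric systems and Frobenius\<close>

lemma constant_of_has_vector_derivative_0:
  fixes E :: "real \<Rightarrow> 'a::real_normed_vector"
  assumes "\<And>y. (E has_vector_derivative 0) (at y)"
  shows "E y = E 0"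
proof -
  have "\<exists>c. \<forall>x\<in>UNIV. E x = c"
    by (rule has_derivative_zero_constant)
      (use assms in \<open>auto simp: has_vector_derivative_def intro: has_derivative_at_withinI\<close>)
  then show ?thesis by auto
qed

lemma matrix_mult_transpose_self_eq_0: "(D::real^'n^'m) ** transpose D = 0 \<Longrightarrow> D = 0"
proof -
  assume "D ** transpose D = 0"
  then have "\<forall>i. (\<Sum>k\<in>UNIV. D$i$k * D$i$k) = 0"
    by (simp add: matrix_matrix_mult_def transpose_def vec_eq_iff)
  then have "\<forall>i. \<forall>k\<in>UNIV. D$i$k * D$i$k = 0"
    by (subst (asm) sum_nonneg_eq_0_iff) auto
  then show "D = 0" by (simp add: vec_eq_iff)
qed

text \<open>If \<open>K' = K C\<close> with \<open>C\<close> skew, then \<open>(K K\<^sup>T)' = K (C + C\<^sup>T) K\<^sup>T = 0\<close>.\<close>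

lemma has_vector_derivative_mult_transpose_skew:
  fixes K :: "real \<Rightarrow> real^'n^'m" and C :: "real \<Rightarrow> real^'n^'n"
  assumes d: "(K has_vector_derivative K y ** C y) (at y)" and skew: "transpose (C y) = - C y"
  shows "((\<lambda>y. K y ** transpose (K y)) has_vector_derivative 0) (at y)"
proof -
  have "((\<lambda>y. transpose (K y)) has_vector_derivative transpose (K y ** C y)) (at y)"
    by (rule bounded_linear.has_vector_derivative[OF bounded_linear_transpose d])
  from has_vector_derivative_matrix_mult[OF d this]
  have "((\<lambda>y. K y ** transpose (K y)) has_vector_derivative
      K y ** transpose (K y ** C y) + (K y ** C y) ** transpose (K y)) (at y)" .
  moreover have "K y ** transpose (K y ** C y) = - ((K y ** C y) ** transpose (K y))"
    by (simp only: matrix_transpose_mul skew matrix_mult_minus_left matrix_mult_minus_right matrix_mul_assoc)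
  ultimately show ?thesis by simp
qed

lemma linear_ode_skew_unique_zero:
  fixes D :: "real \<Rightarrow> real^'n^'m" and C :: "real \<Rightarrow> real^'n^'n"
  assumes "\<And>y. (D has_vector_derivative D y ** C y) (at y)"
    and "\<And>y. transpose (C y) = - C y" and "D 0 = 0"
  shows "D y = 0"
proof -
  have "D y ** transpose (D y) = D 0 ** transpose (D 0)"
    by (rule constant_of_has_vector_derivative_0[where E="\<lambda>y. D y ** transpose (D y)"])
      (rule has_vector_derivative_mult_transpose_skew[OF assms(1,2)])
  then show ?thesis
    using assms(3) by (rule_tac matrix_mult_transpose_self_eq_0) simp
qed

lemma linear_ode_skew_orthogonal:
  fixes K C :: "real \<Rightarrow> real^'n^'n"
  assumes d: "\<And>y. (K has_vector_derivative K y ** C y) (at y)"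
    and skew: "\<And>y. transpose (C y) = - C y" and K0: "K 0 = mat 1"
  shows "K y ** transpose (K y) = mat 1"
proof -
  have "K y ** transpose (K y) = K 0 ** transpose (K 0)"
    by (rule constant_of_has_vector_derivative_0[where E="\<lambda>y. K y ** transpose (K y)"])
      (rule has_vector_derivative_mult_transpose_skew[OF d skew])
  then show ?thesis using K0 by simp
qed

text \<open>The determinant is continuous with values \<open>\<plusminus>1\<close>, and equals \<open>1\<close> at \<open>0\<close>.\<close>

lemma linear_ode_skew_det:
  fixes K C :: "real \<Rightarrow> real^'n^'n"
  assumes d: "\<And>y. (K has_vector_derivative K y ** C y) (at y)"
    and skew: "\<And>y. transpose (C y) = - C y" and K0: "K 0 = mat 1"
  shows "det (K y) = 1"
proof (rule ccontr)
  define f where "f y = det (K y)" for y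
  have sq: "f y * f y = 1" for y
    using arg_cong[OF linear_ode_skew_orthogonal[OF d skew K0, of y], of det]
    by (simp add: det_mul f_def)
  have "continuous_on UNIV K"
    by (intro continuous_at_imp_continuous_on ballI has_vector_derivative_continuous[OF d])
  then have c: "continuous_on UNIV f"
    unfolding f_def by (rule continuous_on_det)
  assume "det (K y) \<noteq> 1"
  then have "f y = -1" using sq[of y] unfolding f_def
    by (metis add.inverse_inverse minus_mult_minus mult_cancel_left1 square_eq_1_iff)
  moreover have "f 0 = 1" by (simp add: f_def K0)
  ultimately have "\<exists>x. f x = 0"
    using IVT2'[of f y 0 0] IVT'[of f y 0 0] continuous_on_subset[OF c]
    by (cases "0 \<le> y") auto
  then show False using sq by (metis mult_zero_left zero_neq_one)
qed

text \<open>The frame is obtained by solving first along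
  the \<open>x\<close>-axis and then along the vertical lines.\<close>

locale zero_curvature_system =
  fixes A B Ay Bx :: "real \<Rightarrow> real \<Rightarrow> real^'n^'n"
  assumes continuous_A: "continuous_on UNIV (\<lambda>(x, y). A x y)"
    and continuous_B: "continuous_on UNIV (\<lambda>(x, y). B x y)"
    and continuous_Bx: "continuous_on UNIV (\<lambda>(x, y). Bx x y)"
    and A_has_derivative_y: "\<And>x y. ((\<lambda>y. A x y) has_vector_derivative Ay x y) (at y)"
    and B_has_derivative_x: "\<And>x y. ((\<lambda>x. B x y) has_vector_derivative Bx x y) (at x)"
    and zero_curvature: "\<And>x y. Ay x y - Bx x y = A x y ** B x y - B x y ** A x y"
    and skew_A: "\<And>x y. transpose (A x y) = - A x y"
    and skew_B: "\<And>x y. transpose (B x y) = - B x y"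
begin

sublocale vertical: matrix_ode_family B Bx
  by unfold_locales (rule continuous_B continuous_Bx B_has_derivative_x)+

sublocale horizontal: matrix_ode_family "\<lambda>_ s. A s 0" "\<lambda>_ _. 0"
  by unfold_locales
    (auto simp: case_prod_unfold intro!: continuous_on_compose_uncurried[OF continuous_A] continuous_intros)

definition frame :: "real \<Rightarrow> real \<Rightarrow> real^'n^'n" where
  "frame x y = horizontal.sol 0 x ** vertical.sol x y"

lemma horizontal_has_derivative:
  "((\<lambda>x. horizontal.sol 0 x) has_vector_derivative horizontal.sol 0 x ** A x 0) (at x)"
  using horizontal.sol_has_derivative_y .

lemma vertical_x_derivative:
  "vertical.sol_dx x y = vertical.sol x y ** A x y - A x 0 ** vertical.sol x y"
proof -
  let ?D = "\<lambda>y. A x 0 ** vertical.sol x y + vertical.sol_dx x y - vertical.sol x y ** A x y"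
  have "?D y = 0"
  proof (rule linear_ode_skew_unique_zero[where C="B x"])
    fix y
    let ?H = "vertical.sol x y" and ?Hx = "vertical.sol_dx x y" and ?A = "A x y" and ?B = "B x y"
    have "(?D has_vector_derivative
        (A x 0 ** (?H ** ?B) + 0 ** ?H) + (?Hx ** ?B + ?H ** Bx x y) - (?H ** Ay x y + (?H ** ?B) ** ?A)) (at y)"
      by (intro has_vector_derivative_diff has_vector_derivative_add vertical.sol_dx_has_derivative_y
          has_vector_derivative_matrix_mult[OF has_vector_derivative_const vertical.sol_has_derivative_y]
          has_vector_derivative_matrix_mult[OF vertical.sol_has_derivative_y A_has_derivative_y])
    moreover have "?H ** Ay x y = ?H ** Bx x y + (?H ** ?A) ** ?B - (?H ** ?B) ** ?A"
    proof -
      have "Ay x y = Bx x y + (?A ** ?B - ?B ** ?A)"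
        using zero_curvature[of x y] by (simp add: algebra_simps)
      then show ?thesis by (simp add: matrix_mult_algebra)
    qed
    ultimately show "(?D has_vector_derivative ?D y ** ?B) (at y)"
      by (simp add: matrix_mult_algebra algebra_simps)
  qed (simp_all add: skew_B vertical.sol_0 vertical.sol_dx_0)
  then show ?thesis by (simp add: algebra_simps)
qed

lemma frame_has_derivative_x: "((\<lambda>x. frame x y) has_vector_derivative frame x y ** A x y) (at x)"
proof -
  have "((\<lambda>x. frame x y) has_vector_derivative
      horizontal.sol 0 x ** vertical.sol_dx x y + (horizontal.sol 0 x ** A x 0) ** vertical.sol x y) (at x)"
    unfolding frame_def
    by (rule has_vector_derivative_matrix_mult[OF horizontal_has_derivative vertical.sol_has_derivative_x])
  then show ?thesis
    by (simp add: frame_def vertical_x_derivative matrix_mult_algebra)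
qed

lemma frame_has_derivative_y: "((\<lambda>y. frame x y) has_vector_derivative frame x y ** B x y) (at y)"
  using has_vector_derivative_matrix_mult[OF has_vector_derivative_const vertical.sol_has_derivative_y]
  by (simp add: frame_def matrix_mul_assoc)

lemma continuous_on_frame: "continuous_on UNIV (\<lambda>(x, y). frame x y)"
proof -
  have "continuous_on UNIV (\<lambda>x. horizontal.sol 0 x)"
    by (intro continuous_at_imp_continuous_on ballI has_vector_derivative_continuous[OF horizontal_has_derivative])
  from continuous_on_compose2[OF this continuous_on_fst[OF continuous_on_id], of UNIV]
  have "continuous_on UNIV (\<lambda>(x, y). horizontal.sol 0 x)" by (simp add: case_prod_unfold)
  then show ?thesis
    unfolding frame_def by (rule continuous_on_matrix_mult_uncurried[OF _ vertical.continuous_on_sol])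
qed

lemma frame_orthogonal: "frame x y ** transpose (frame x y) = mat 1"
proof -
  have "frame x y ** transpose (frame x y) =
      horizontal.sol 0 x ** (vertical.sol x y ** transpose (vertical.sol x y)) ** transpose (horizontal.sol 0 x)"
    by (simp add: frame_def matrix_transpose_mul matrix_mul_assoc)
  also have "\<dots> = mat 1"
    using linear_ode_skew_orthogonal[OF vertical.sol_has_derivative_y skew_B vertical.sol_0]
      linear_ode_skew_orthogonal[OF horizontal_has_derivative skew_A horizontal.sol_0]
    by simp
  finally show ?thesis .
qed

lemma frame_det: "det (frame x y) = 1"
  using linear_ode_skew_det[OF vertical.sol_has_derivative_y skew_B vertical.sol_0]
    linear_ode_skew_det[OF horizontal_has_derivative skew_A horizontal.sol_0]
  by (simp add: frame_def det_mul)

lemma frame_rotation: "rotation_matrix (frame x y)"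
  using frame_orthogonal frame_det matrix_left_right_inverse[of "frame x y" "transpose (frame x y)"]
  by (simp add: rotation_matrix_def orthogonal_matrix_def)

end

section \<open>Partial derivatives in the complex plane\<close>

lemma has_vector_derivative_partial_x:
  fixes u :: "complex \<Rightarrow> 'a::real_normed_vector"
  assumes "u differentiable at (Complex x y)"
  shows "((\<lambda>s. u (Complex s y)) has_vector_derivative dx u (Complex x y)) (at x)"
proof -
  have "((\<lambda>s. Complex s y) has_derivative (\<lambda>h. h *\<^sub>R 1)) (at x)"
    unfolding Complex_eq by (auto intro!: derivative_eq_intros simp: scaleR_conv_of_real)
  from has_derivative_compose[OF this assms[unfolded frechet_derivative_works]]
  show ?thesis
    by (simp add: has_vector_derivative_def dx_def
        linear_scale[OF has_derivative_linear[OF assms[unfolded frechet_derivative_works]]])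
qed

lemma has_vector_derivative_partial_y:
  fixes u :: "complex \<Rightarrow> 'a::real_normed_vector"
  assumes "u differentiable at (Complex x y)"
  shows "((\<lambda>s. u (Complex x s)) has_vector_derivative dy u (Complex x y)) (at y)"
proof -
  have "((\<lambda>s. Complex x s) has_derivative (\<lambda>h. h *\<^sub>R \<i>)) (at y)"
    unfolding Complex_eq by (auto intro!: derivative_eq_intros simp: scaleR_conv_of_real mult.commute)
  from has_derivative_compose[OF this assms[unfolded frechet_derivative_works]]
  show ?thesis
    by (simp add: has_vector_derivative_def dy_def
        linear_scale[OF has_derivative_linear[OF assms[unfolded frechet_derivative_works]]])
qed

lemma continuous_on_Complex_uncurried:
  assumes "continuous_on UNIV u"
  shows "continuous_on UNIV (\<lambda>(x, y). u (Complex x y))"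
  unfolding Complex_eq case_prod_unfold
  by (intro continuous_on_compose2[OF assms] continuous_intros) auto

lemma continuous_on_Re_Im:
  assumes "continuous_on UNIV (\<lambda>(x, y). g x y)"
  shows "continuous_on UNIV (\<lambda>z. g (Re z) (Im z))"
  by (intro continuous_on_compose_uncurried[OF assms] continuous_intros)

lemma has_derivative_of_partials:
  fixes g gx gy :: "real \<Rightarrow> real \<Rightarrow> 'a::real_normed_vector"
  assumes dgx: "\<And>x y. ((\<lambda>x. g x y) has_vector_derivative gx x y) (at x)"
    and dgy: "\<And>x y. ((\<lambda>y. g x y) has_vector_derivative gy x y) (at y)"
    and cgy: "continuous_on UNIV (\<lambda>(x, y). gy x y)"
  shows "((\<lambda>z. g (Re z) (Im z)) has_derivative
     (\<lambda>h. Re h *\<^sub>R gx (Re z) (Im z) + Im h *\<^sub>R gy (Re z) (Im z))) (at z)"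
proof -
  let ?x = "Re z" and ?y = "Im z"
  have "((\<lambda>(x, y). g x y) has_derivative
      (\<lambda>(tx, ty). tx *\<^sub>R gx ?x ?y + blinfun_scaleR_left (gy ?x ?y) ty)) (at (?x, ?y) within UNIV \<times> UNIV)"
  proof (rule has_derivative_partialsI)
    have "continuous_on UNIV (blinfun_scaleR_left \<circ> (\<lambda>(x, y). gy x y))"
      by (intro continuous_on_compose cgy linear_continuous_on bounded_linear_blinfun_scaleR_left)
    then show "continuous (at (?x, ?y) within UNIV \<times> UNIV) (\<lambda>(x, y). blinfun_scaleR_left (gy x y))"
      by (simp add: continuous_on_eq_continuous_within o_def case_prod_unfold)
  qed (use dgx dgy in \<open>auto simp: has_vector_derivative_def\<close>)
  then have "((\<lambda>(x, y). g x y) has_derivative (\<lambda>(tx, ty). tx *\<^sub>R gx ?x ?y + ty *\<^sub>R gy ?x ?y)) (at (?x, ?y))"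
    by simp
  moreover have "((\<lambda>z. (Re z, Im z)) has_derivative (\<lambda>h. (Re h, Im h))) (at z)"
    by (auto intro!: derivative_eq_intros)
  ultimately show ?thesis
    using has_derivative_compose[of "\<lambda>z. (Re z, Im z)" _ z UNIV "\<lambda>(x, y). g x y"] by fastforce
qed

lemma partials_of_partials:
  fixes g gx gy :: "real \<Rightarrow> real \<Rightarrow> 'a::real_normed_vector"
  assumes "\<And>x y. ((\<lambda>x. g x y) has_vector_derivative gx x y) (at x)"
    and "\<And>x y. ((\<lambda>y. g x y) has_vector_derivative gy x y) (at y)"
    and "continuous_on UNIV (\<lambda>(x, y). gy x y)"
  shows "(\<lambda>z. g (Re z) (Im z)) differentiable at z"
    and "frechet_derivative (\<lambda>z. g (Re z) (Im z)) (at z) =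
      (\<lambda>h. Re h *\<^sub>R gx (Re z) (Im z) + Im h *\<^sub>R gy (Re z) (Im z))"
    and "dx (\<lambda>z. g (Re z) (Im z)) = (\<lambda>z. gx (Re z) (Im z))"
    and "dy (\<lambda>z. g (Re z) (Im z)) = (\<lambda>z. gy (Re z) (Im z))"
proof -
  note d = has_derivative_of_partials[OF assms]
  have fd: "frechet_derivative (\<lambda>z. g (Re z) (Im z)) (at w) =
      (\<lambda>h. Re h *\<^sub>R gx (Re w) (Im w) + Im h *\<^sub>R gy (Re w) (Im w))" for w
    using frechet_derivative_at[OF d[of w]] by simp
  show "(\<lambda>z. g (Re z) (Im z)) differentiable at z" using d by (auto simp: differentiable_def)
  show "frechet_derivative (\<lambda>z. g (Re z) (Im z)) (at z) =
      (\<lambda>h. Re h *\<^sub>R gx (Re z) (Im z) + Im h *\<^sub>R gy (Re z) (Im z))" by (rule fd)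
  show "dx (\<lambda>z. g (Re z) (Im z)) = (\<lambda>z. gx (Re z) (Im z))"
    "dy (\<lambda>z. g (Re z) (Im z)) = (\<lambda>z. gy (Re z) (Im z))"
    by (simp_all add: dx_def dy_def fun_eq_iff fd)
qed

lemma C2_of_partials:
  fixes g gx gy gxx gxy gyx gyy :: "real \<Rightarrow> real \<Rightarrow> 'a::real_normed_vector"
  assumes d: "\<And>x y. ((\<lambda>x. g x y) has_vector_derivative gx x y) (at x)"
      "\<And>x y. ((\<lambda>y. g x y) has_vector_derivative gy x y) (at y)"
    and dx: "\<And>x y. ((\<lambda>x. gx x y) has_vector_derivative gxx x y) (at x)"
      "\<And>x y. ((\<lambda>y. gx x y) has_vector_derivative gxy x y) (at y)"
    and dy: "\<And>x y. ((\<lambda>x. gy x y) has_vector_derivative gyx x y) (at x)"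
      "\<And>x y. ((\<lambda>y. gy x y) has_vector_derivative gyy x y) (at y)"
    and c: "continuous_on UNIV (\<lambda>(x, y). gx x y)" "continuous_on UNIV (\<lambda>(x, y). gy x y)"
      "continuous_on UNIV (\<lambda>(x, y). gxx x y)" "continuous_on UNIV (\<lambda>(x, y). gxy x y)"
      "continuous_on UNIV (\<lambda>(x, y). gyx x y)" "continuous_on UNIV (\<lambda>(x, y). gyy x y)"
  shows "C2 (\<lambda>z. g (Re z) (Im z))"
    "dx (dx (\<lambda>z. g (Re z) (Im z))) = (\<lambda>z. gxx (Re z) (Im z))"
    "dy (dy (\<lambda>z. g (Re z) (Im z))) = (\<lambda>z. gyy (Re z) (Im z))"
proof -
  note g = partials_of_partials[OF d c(2)]
  note gx = partials_of_partials[OF dx c(4)]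
  note gy = partials_of_partials[OF dy c(6)]
  show "dx (dx (\<lambda>z. g (Re z) (Im z))) = (\<lambda>z. gxx (Re z) (Im z))"
    "dy (dy (\<lambda>z. g (Re z) (Im z))) = (\<lambda>z. gyy (Re z) (Im z))"
    unfolding g(3,4) gx(3) gy(4) by simp_all
  show "C2 (\<lambda>z. g (Re z) (Im z))"
    unfolding C2_def g(3,4) gx(3,4) gy(3,4)
    using g(1) gx(1) gy(1) continuous_on_Re_Im[OF c(1)] continuous_on_Re_Im[OF c(2)]
      continuous_on_Re_Im[OF c(3)] continuous_on_Re_Im[OF c(4)] continuous_on_Re_Im[OF c(5)]
      continuous_on_Re_Im[OF c(6)]
    by blast
qed

section \<open>The frame of a sinh-Gordon solution\<close>

definition rot12 :: "real^3^3" where "rot12 = vector [vector [0, -1, 0], vector [1, 0, 0], vector [0, 0, 0]]"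
definition rot13 :: "real^3^3" where "rot13 = vector [vector [0, 0, 1], vector [0, 0, 0], vector [-1, 0, 0]]"
definition rot23 :: "real^3^3" where "rot23 = vector [vector [0, 0, 0], vector [0, 0, 1], vector [0, -1, 0]]"
definition e1 :: "real^3" where "e1 = vector [1, 0, 0]"
definition e2 :: "real^3" where "e2 = vector [0, 1, 0]"
definition e3 :: "real^3" where "e3 = vector [0, 0, 1]"

lemmas so3_defs = rot12_def rot13_def rot23_def e1_def e2_def e3_def

abbreviation skew3 :: "real \<Rightarrow> real \<Rightarrow> real \<Rightarrow> real^3^3" where
  "skew3 a b c \<equiv> a *\<^sub>R rot12 + b *\<^sub>R rot13 + c *\<^sub>R rot23"

lemma transpose_skew3: "transpose (skew3 a b c) = - skew3 a b c"
  by (simp add: vec_eq_iff forall_3 so3_defs transpose_def)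

lemma skew3_commutator:
  "skew3 a b c ** skew3 d e f - skew3 d e f ** skew3 a b c = skew3 (b * f - c * e) (c * d - a * f) (a * e - b * d)"
  by (simp add: vec_eq_iff forall_3 so3_defs matrix_matrix_mult_def sum_3 algebra_simps)

lemma skew3_mult_e3: "skew3 a b c *v e3 = b *\<^sub>R e1 + c *\<^sub>R e2"
  by (simp add: vec_eq_iff forall_3 so3_defs matrix_vector_mult_def sum_3)

lemma skew3_mult_horizontal:
  "skew3 a b c *v (d *\<^sub>R e1 + e *\<^sub>R e2) = (- a * e) *\<^sub>R e1 + (a * d) *\<^sub>R e2 + (- b * d - c * e) *\<^sub>R e3"
  by (simp add: vec_eq_iff forall_3 so3_defs matrix_vector_mult_def sum_3 algebra_simps)

lemma skew3_diff: "skew3 a b c - skew3 d e f = skew3 (a - d) (b - e) (c - f)"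
  by (simp add: algebra_simps)

text \<open>A solution \<open>u = \<epsilon> f\<close> (\<open>\<epsilon> = \<plusminus>1\<close>) of \<open>\<Delta>u = -2 sinh 2u\<close> together with a unit vector \<open>(\<kappa>, \<sigma>)\<close>
  gives the zero-curvature system below; its frame \<open>F\<close> carries the map \<open>\<phi> = F e\<^sub>3\<close> into \<open>S\<^sup>2\<close>
  with \<open>\<phi>\<^sub>x = F (p\<^sub>1, p\<^sub>2, 0)\<close> and \<open>\<phi>\<^sub>y = F (q\<^sub>1, q\<^sub>2, 0)\<close>.\<close>

locale sinh_gordon_frame =
  fixes f :: "complex \<Rightarrow> real" and \<epsilon> \<kappa> \<sigma> :: real
  assumes sinh_gordon_f: "sinh_gordon f" and sign: "\<epsilon> = 1 \<or> \<epsilon> = -1" and unit: "\<kappa>\<^sup>2 + \<sigma>\<^sup>2 = 1"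
begin

definition "u x y = \<epsilon> * f (Complex x y)"
definition "ux x y = \<epsilon> * dx f (Complex x y)"
definition "uy x y = \<epsilon> * dy f (Complex x y)"
definition "uxx x y = \<epsilon> * dx (dx f) (Complex x y)"
definition "uyy x y = \<epsilon> * dy (dy f) (Complex x y)"

lemma u_has_derivative [derivative_intros]:
  "((\<lambda>x. u x y) has_real_derivative ux x y) (at x)"
  "((\<lambda>y. u x y) has_real_derivative uy x y) (at y)"
  "((\<lambda>x. ux x y) has_real_derivative uxx x y) (at x)"
  "((\<lambda>y. uy x y) has_real_derivative uyy x y) (at y)"
proof -
  have "f differentiable at z" "dx f differentiable at z" "dy f differentiable at z" for z
    using sinh_gordon_f by (auto simp: sinh_gordon_def C2_def)
  from this[THEN has_vector_derivative_partial_x] this[THEN has_vector_derivative_partial_y]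
  show "((\<lambda>x. u x y) has_real_derivative ux x y) (at x)"
    "((\<lambda>y. u x y) has_real_derivative uy x y) (at y)"
    "((\<lambda>x. ux x y) has_real_derivative uxx x y) (at x)"
    "((\<lambda>y. uy x y) has_real_derivative uyy x y) (at y)"
    unfolding u_def ux_def uy_def uxx_def uyy_def has_real_derivative_iff_has_vector_derivative
    by (auto intro!: derivative_eq_intros)
qed

lemma continuous_on_u:
  "continuous_on UNIV (\<lambda>p. u (fst p) (snd p))" "continuous_on UNIV (\<lambda>p. ux (fst p) (snd p))"
  "continuous_on UNIV (\<lambda>p. uy (fst p) (snd p))" "continuous_on UNIV (\<lambda>p. uxx (fst p) (snd p))"
  "continuous_on UNIV (\<lambda>p. uyy (fst p) (snd p))"
proof -
  have "continuous_on UNIV f"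
    using sinh_gordon_f
    by (intro continuous_at_imp_continuous_on ballI differentiable_imp_continuous_within)
      (auto simp: sinh_gordon_def C2_def)
  moreover have "continuous_on UNIV (dx f)" "continuous_on UNIV (dy f)"
    "continuous_on UNIV (dx (dx f))" "continuous_on UNIV (dy (dy f))"
    using sinh_gordon_f by (auto simp: sinh_gordon_def C2_def)
  ultimately show "continuous_on UNIV (\<lambda>p. u (fst p) (snd p))" "continuous_on UNIV (\<lambda>p. ux (fst p) (snd p))"
    "continuous_on UNIV (\<lambda>p. uy (fst p) (snd p))" "continuous_on UNIV (\<lambda>p. uxx (fst p) (snd p))"
    "continuous_on UNIV (\<lambda>p. uyy (fst p) (snd p))"
    unfolding u_def ux_def uy_def uxx_def uyy_def
    by (auto intro!: continuous_intros continuous_on_Complex_uncurried[unfolded case_prod_unfold])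
qed

lemma u_laplacian: "uxx x y + uyy x y = - 2 * sinh (2 * u x y)"
proof -
  have "(dx (dx f) (Complex x y) + dy (dy f) (Complex x y)) / 4 + sinh (2 * f (Complex x y)) / 2 = 0"
    using sinh_gordon_f unfolding sinh_gordon_def by blast
  then have "dx (dx f) (Complex x y) + dy (dy f) (Complex x y) = - 2 * sinh (2 * f (Complex x y))"
    by (simp add: field_simps)
  then show ?thesis
    using sign by (auto simp: u_def uxx_def uyy_def algebra_simps)
qed

definition "p1 x y = 2 * \<kappa> * cosh (u x y)"
definition "p2 x y = 2 * \<sigma> * sinh (u x y)"
definition "q1 x y = - 2 * \<sigma> * cosh (u x y)"
definition "q2 x y = 2 * \<kappa> * sinh (u x y)"

definition "A x y = skew3 (- uy x y) (p1 x y) (p2 x y)"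
definition "B x y = skew3 (ux x y) (q1 x y) (q2 x y)"
definition "Ay x y = skew3 (- uyy x y) (2 * \<kappa> * sinh (u x y) * uy x y) (2 * \<sigma> * cosh (u x y) * uy x y)"
definition "Bx x y = skew3 (uxx x y) (- 2 * \<sigma> * sinh (u x y) * ux x y) (2 * \<kappa> * cosh (u x y) * ux x y)"

lemma zero_curvature: "Ay x y - Bx x y = A x y ** B x y - B x y ** A x y"
proof -
  have "- uyy x y - uxx x y = 4 * cosh (u x y) * sinh (u x y) * (\<kappa>\<^sup>2 + \<sigma>\<^sup>2)"
    using u_laplacian[of x y] unit by (simp add: sinh_double algebra_simps)
  also have "\<dots> = p1 x y * q2 x y - p2 x y * q1 x y"
    unfolding p1_def p2_def q1_def q2_def by (simp add: algebra_simps power2_eq_square)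
  finally have c1: "- uyy x y - uxx x y = p1 x y * q2 x y - p2 x y * q1 x y" .
  have c2: "2 * \<kappa> * sinh (u x y) * uy x y - - 2 * \<sigma> * sinh (u x y) * ux x y
      = p2 x y * ux x y - (- uy x y) * q2 x y"
    and c3: "2 * \<sigma> * cosh (u x y) * uy x y - 2 * \<kappa> * cosh (u x y) * ux x y
      = (- uy x y) * q1 x y - p1 x y * ux x y"
    unfolding p1_def p2_def q1_def q2_def by (simp_all add: algebra_simps)
  have "Ay x y - Bx x y = skew3 (- uyy x y - uxx x y)
      (2 * \<kappa> * sinh (u x y) * uy x y - - 2 * \<sigma> * sinh (u x y) * ux x y)
      (2 * \<sigma> * cosh (u x y) * uy x y - 2 * \<kappa> * cosh (u x y) * ux x y)"
    unfolding Ay_def Bx_def skew3_diff ..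
  also have "\<dots> = A x y ** B x y - B x y ** A x y"
    unfolding c1 c2 c3 A_def B_def skew3_commutator ..
  finally show ?thesis .
qed

sublocale zero_curvature_system A B Ay Bx
proof
  show "continuous_on UNIV (\<lambda>(x, y). A x y)" "continuous_on UNIV (\<lambda>(x, y). B x y)"
    "continuous_on UNIV (\<lambda>(x, y). Bx x y)"
    unfolding A_def B_def Bx_def p1_def p2_def q1_def q2_def
    by (intro continuous_on_uncurry continuous_intros continuous_on_u)+
  show "((\<lambda>y. A x y) has_vector_derivative Ay x y) (at y)" for x y
    unfolding A_def Ay_def p1_def p2_def by (auto intro!: derivative_eq_intros simp: algebra_simps)
  show "((\<lambda>x. B x y) has_vector_derivative Bx x y) (at x)" for x y
    unfolding B_def Bx_def q1_def q2_def by (auto intro!: derivative_eq_intros simp: algebra_simps)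
  show "transpose (A x y) = - A x y" "transpose (B x y) = - B x y" for x y
    unfolding A_def B_def by (rule transpose_skew3)+
qed (rule zero_curvature)

end

context sinh_gordon_frame
begin

definition "pv x y = p1 x y *\<^sub>R e1 + p2 x y *\<^sub>R e2"
definition "qv x y = q1 x y *\<^sub>R e1 + q2 x y *\<^sub>R e2"
definition "pvx x y = (2 * \<kappa> * sinh (u x y) * ux x y) *\<^sub>R e1 + (2 * \<sigma> * cosh (u x y) * ux x y) *\<^sub>R e2"
definition "pvy x y = (2 * \<kappa> * sinh (u x y) * uy x y) *\<^sub>R e1 + (2 * \<sigma> * cosh (u x y) * uy x y) *\<^sub>R e2"
definition "qvx x y = (- 2 * \<sigma> * sinh (u x y) * ux x y) *\<^sub>R e1 + (2 * \<kappa> * cosh (u x y) * ux x y) *\<^sub>R e2"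
definition "qvy x y = (- 2 * \<sigma> * sinh (u x y) * uy x y) *\<^sub>R e1 + (2 * \<kappa> * cosh (u x y) * uy x y) *\<^sub>R e2"

definition "phi x y = frame x y *v e3"
definition "phi_x x y = frame x y *v pv x y"
definition "phi_y x y = frame x y *v qv x y"
definition "phi_xx x y = frame x y *v (A x y *v pv x y + pvx x y)"
definition "phi_xy x y = frame x y *v (B x y *v pv x y + pvy x y)"
definition "phi_yx x y = frame x y *v (A x y *v qv x y + qvx x y)"
definition "phi_yy x y = frame x y *v (B x y *v qv x y + qvy x y)"

lemma pv_has_derivative:
  "((\<lambda>x. pv x y) has_vector_derivative pvx x y) (at x)" "((\<lambda>y. pv x y) has_vector_derivative pvy x y) (at y)"
  "((\<lambda>x. qv x y) has_vector_derivative qvx x y) (at x)" "((\<lambda>y. qv x y) has_vector_derivative qvy x y) (at y)"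
  unfolding pv_def pvx_def pvy_def qv_def qvx_def qvy_def p1_def p2_def q1_def q2_def
  by (auto intro!: derivative_eq_intros simp: algebra_simps)

lemma frame_mult_has_derivative:
  assumes "\<And>x y. ((\<lambda>x. v x y) has_vector_derivative v' x y) (at x)"
    and "\<And>x y. ((\<lambda>y. v x y) has_vector_derivative v'' x y) (at y)"
  shows "((\<lambda>x. frame x y *v v x y) has_vector_derivative frame x y *v (A x y *v v x y + v' x y)) (at x)"
    and "((\<lambda>y. frame x y *v v x y) has_vector_derivative frame x y *v (B x y *v v x y + v'' x y)) (at y)"
  using has_vector_derivative_matrix_vector_mult[OF frame_has_derivative_x assms(1)]
    has_vector_derivative_matrix_vector_mult[OF frame_has_derivative_y assms(2)]
  by (simp_all add: matrix_vector_mul_assoc[symmetric] matrix_vector_right_distrib add.commute)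

lemma A_mult_e3: "A x y *v e3 = pv x y" and B_mult_e3: "B x y *v e3 = qv x y"
  unfolding A_def B_def pv_def qv_def by (rule skew3_mult_e3)+

lemma phi_has_derivative:
  "((\<lambda>x. phi x y) has_vector_derivative phi_x x y) (at x)"
  "((\<lambda>y. phi x y) has_vector_derivative phi_y x y) (at y)"
  "((\<lambda>x. phi_x x y) has_vector_derivative phi_xx x y) (at x)"
  "((\<lambda>y. phi_x x y) has_vector_derivative phi_xy x y) (at y)"
  "((\<lambda>x. phi_y x y) has_vector_derivative phi_yx x y) (at x)"
  "((\<lambda>y. phi_y x y) has_vector_derivative phi_yy x y) (at y)"
proof -
  note e3 = frame_mult_has_derivative[where v="\<lambda>_ _. e3" and v'="\<lambda>_ _. 0" and v''="\<lambda>_ _. 0"]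
  show "((\<lambda>x. phi x y) has_vector_derivative phi_x x y) (at x)"
    "((\<lambda>y. phi x y) has_vector_derivative phi_y x y) (at y)"
    using e3 by (simp_all add: phi_def phi_x_def phi_y_def A_mult_e3 B_mult_e3)
  show "((\<lambda>x. phi_x x y) has_vector_derivative phi_xx x y) (at x)"
    "((\<lambda>y. phi_x x y) has_vector_derivative phi_xy x y) (at y)"
    unfolding phi_x_def phi_xx_def phi_xy_def by (rule frame_mult_has_derivative[OF pv_has_derivative(1,2)])+
  show "((\<lambda>x. phi_y x y) has_vector_derivative phi_yx x y) (at x)"
    "((\<lambda>y. phi_y x y) has_vector_derivative phi_yy x y) (at y)"
    unfolding phi_y_def phi_yx_def phi_yy_def by (rule frame_mult_has_derivative[OF pv_has_derivative(3,4)])+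
qed

lemma continuous_on_phi:
  "continuous_on UNIV (\<lambda>(x, y). phi_x x y)" "continuous_on UNIV (\<lambda>(x, y). phi_y x y)"
  "continuous_on UNIV (\<lambda>(x, y). phi_xx x y)" "continuous_on UNIV (\<lambda>(x, y). phi_xy x y)"
  "continuous_on UNIV (\<lambda>(x, y). phi_yx x y)" "continuous_on UNIV (\<lambda>(x, y). phi_yy x y)"
proof -
  note bilinear = bounded_bilinear.continuous_on[OF bounded_bilinear_matrix_vector_mult]
  have F: "continuous_on UNIV (\<lambda>p. frame (fst p) (snd p))"
    and A: "continuous_on UNIV (\<lambda>p. A (fst p) (snd p))"
    and B: "continuous_on UNIV (\<lambda>p. B (fst p) (snd p))"
    using continuous_on_frame continuous_A continuous_B by (simp_all add: case_prod_unfold)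
  show "continuous_on UNIV (\<lambda>(x, y). phi_x x y)" "continuous_on UNIV (\<lambda>(x, y). phi_y x y)"
    "continuous_on UNIV (\<lambda>(x, y). phi_xx x y)" "continuous_on UNIV (\<lambda>(x, y). phi_xy x y)"
    "continuous_on UNIV (\<lambda>(x, y). phi_yx x y)" "continuous_on UNIV (\<lambda>(x, y). phi_yy x y)"
    unfolding phi_x_def phi_y_def phi_xx_def phi_xy_def phi_yx_def phi_yy_def
      pv_def qv_def pvx_def pvy_def qvx_def qvy_def p1_def p2_def q1_def q2_def
    by (intro continuous_on_uncurry bilinear F A B continuous_intros continuous_on_u)+
qed

lemma phi_inner:
  "phi x y \<bullet> phi x y = 1"
  "phi_x x y \<bullet> phi_x x y = (p1 x y)\<^sup>2 + (p2 x y)\<^sup>2"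
  "phi_y x y \<bullet> phi_y x y = (q1 x y)\<^sup>2 + (q2 x y)\<^sup>2"
  "phi_x x y \<bullet> phi_y x y = p1 x y * q1 x y + p2 x y * q2 x y"
  "phi x y \<bullet> phi_x x y = 0"
  "phi x y \<bullet> phi_y x y = 0"
  unfolding phi_def phi_x_def phi_y_def rotation_matrix_inner[OF frame_rotation] pv_def qv_def
  by (simp_all add: so3_defs inner_vec_def sum_3 power2_eq_square algebra_simps)

lemma phi_cross: "cross3 (phi x y) (phi_x x y) \<bullet> phi_y x y = p1 x y * q2 x y - p2 x y * q1 x y"
  unfolding phi_def phi_x_def phi_y_def cross_rotation_matrix[OF frame_rotation]
    rotation_matrix_inner[OF frame_rotation] pv_def qv_def
  by (simp add: so3_defs inner_vec_def sum_3 cross3_def algebra_simps)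

lemma phi_cross_cross:
  "cross3 (phi x y) (phi_x x y) \<bullet> cross3 (phi x y) (phi_x x y) = phi_x x y \<bullet> phi_x x y"
  "cross3 (phi x y) (phi_y x y) \<bullet> cross3 (phi x y) (phi_y x y) = phi_y x y \<bullet> phi_y x y"
  "cross3 (phi x y) (phi_x x y) \<bullet> cross3 (phi x y) (phi_y x y) = phi_x x y \<bullet> phi_y x y"
  "cross3 (phi x y) (phi_y x y) \<bullet> cross3 (phi x y) (phi_x x y) = phi_x x y \<bullet> phi_y x y"
  by (simp_all add: dot_cross phi_inner(1,5,6) inner_commute)

text \<open>\<open>\<phi>\<close> is harmonic into \<open>S\<^sup>2\<close>: its Laplacian is normal to the sphere.\<close>

lemma phi_laplacian:
  "phi_xx x y + phi_yy x y = (- ((p1 x y)\<^sup>2 + (p2 x y)\<^sup>2 + (q1 x y)\<^sup>2 + (q2 x y)\<^sup>2)) *\<^sub>R phi x y"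
proof -
  have "A x y *v pv x y + pvx x y + (B x y *v qv x y + qvy x y) =
      (- ((p1 x y)\<^sup>2 + (p2 x y)\<^sup>2 + (q1 x y)\<^sup>2 + (q2 x y)\<^sup>2)) *\<^sub>R e3"
    unfolding A_def B_def pv_def qv_def skew3_mult_horizontal pvx_def qvy_def p1_def p2_def q1_def q2_def
    by (simp add: vec_eq_iff forall_3 so3_defs power2_eq_square algebra_simps)
  then show ?thesis
    by (simp add: phi_xx_def phi_yy_def phi_def matrix_vector_right_distrib[symmetric] matrix_vector_mult_scaleR)
qed

end

section \<open>The immersion into \<open>S\<^sup>2 \<times> S\<^sup>2\<close>\<close>

lemma power2_tanh_real_neq_1: "(tanh (x :: real))\<^sup>2 \<noteq> 1"
  using tanh_real_lt_1[of x] tanh_real_gt_neg1[of x] by (auto simp: power2_eq_1_iff)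

lemma cosh_sinh_identities:
  fixes c s cv sv cw sw :: real
  assumes "c\<^sup>2 + s\<^sup>2 = 1" "cv\<^sup>2 = sv\<^sup>2 + 1" "cw\<^sup>2 = sw\<^sup>2 + 1"
  shows "(2 * c * cv)\<^sup>2 + (2 * s * sv)\<^sup>2 + (2 * s * cw)\<^sup>2 + (2 * c * sw)\<^sup>2 = 4 * ((cv * cw + sv * sw) * (cv * cw - sv * sw))"
    "(2 * s * cv)\<^sup>2 + (2 * c * sv)\<^sup>2 + (2 * c * cw)\<^sup>2 + (2 * s * sw)\<^sup>2 = 4 * ((cv * cw + sv * sw) * (cv * cw - sv * sw))"
    "cv * sv - cw * sw = (cv * cw + sv * sw) * (sv * cw - cv * sw)"
    "cv * sv + cw * sw = (cv * cw - sv * sw) * (sv * cw + cv * sw)"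
  using assms by algebra+

text \<open>The immersion pairs the sphere map of \<open>v\<close> (with \<open>(\<kappa>, \<sigma>) = (cos (t/2), sin (t/2))\<close>) with
  that of \<open>-w\<close> (with \<open>(\<kappa>, \<sigma>) = (-sin (t/2), cos (t/2))\<close>); the rotation by \<open>t/2\<close> of the two
  frames turns the Hopf differential by \<open>t\<close>.\<close>

locale sinh_gordon_pair =
  fixes v w :: "complex \<Rightarrow> real" and t :: real
  assumes sinh_gordon_v: "sinh_gordon v" and sinh_gordon_w: "sinh_gordon w"
begin

sublocale a: sinh_gordon_frame v 1 "cos (t/2)" "sin (t/2)"
  by unfold_locales (simp_all add: sinh_gordon_v)

sublocale b: sinh_gordon_frame w "-1" "- sin (t/2)" "cos (t/2)"
  by unfold_locales (simp_all add: sinh_gordon_w)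

definition immersion :: "complex \<Rightarrow> pt" where
  "immersion z = (a.phi (Re z) (Im z), b.phi (Re z) (Im z))"

definition metric :: "complex \<Rightarrow> real" where
  "metric z = 4 * cosh (v z + w z) * cosh (v z - w z)"

abbreviation "c \<equiv> cos (t/2)"
abbreviation "s \<equiv> sin (t/2)"

lemma frame_coefficients:
  "a.p1 (Re z) (Im z) = 2 * c * cosh (v z)" "a.p2 (Re z) (Im z) = 2 * s * sinh (v z)"
  "a.q1 (Re z) (Im z) = - 2 * s * cosh (v z)" "a.q2 (Re z) (Im z) = 2 * c * sinh (v z)"
  "b.p1 (Re z) (Im z) = - 2 * s * cosh (w z)" "b.p2 (Re z) (Im z) = - 2 * c * sinh (w z)"
  "b.q1 (Re z) (Im z) = - 2 * c * cosh (w z)" "b.q2 (Re z) (Im z) = 2 * s * sinh (w z)"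
  by (simp_all add: a.p1_def a.p2_def a.q1_def a.q2_def b.p1_def b.p2_def b.q1_def b.q2_def a.u_def b.u_def)

lemma immersion_partials:
  "C2 immersion"
  "dx immersion = (\<lambda>z. (a.phi_x (Re z) (Im z), b.phi_x (Re z) (Im z)))"
  "dy immersion = (\<lambda>z. (a.phi_y (Re z) (Im z), b.phi_y (Re z) (Im z)))"
  "dx (dx immersion) = (\<lambda>z. (a.phi_xx (Re z) (Im z), b.phi_xx (Re z) (Im z)))"
  "dy (dy immersion) = (\<lambda>z. (a.phi_yy (Re z) (Im z), b.phi_yy (Re z) (Im z)))"
  "frechet_derivative immersion (at z) = (\<lambda>h. Re h *\<^sub>R dx immersion z + Im h *\<^sub>R dy immersion z)"
proof -
  have pair: "continuous_on UNIV (\<lambda>(x, y). (f1 x y, f2 x y))"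
    if "continuous_on UNIV (\<lambda>(x, y). f1 x y)" "continuous_on UNIV (\<lambda>(x, y). f2 x y)"
    for f1 f2 :: "real \<Rightarrow> real \<Rightarrow> real^3"
    using continuous_on_Pair[OF that] by (simp add: case_prod_unfold)
  let ?g = "\<lambda>x y. (a.phi x y, b.phi x y)"
  have g: "immersion = (\<lambda>z. ?g (Re z) (Im z))" by (simp add: fun_eq_iff immersion_def)
  note derivs = has_vector_derivative_Pair[OF a.phi_has_derivative(1) b.phi_has_derivative(1)]
    has_vector_derivative_Pair[OF a.phi_has_derivative(2) b.phi_has_derivative(2)]
    has_vector_derivative_Pair[OF a.phi_has_derivative(3) b.phi_has_derivative(3)]
    has_vector_derivative_Pair[OF a.phi_has_derivative(4) b.phi_has_derivative(4)]
    has_vector_derivative_Pair[OF a.phi_has_derivative(5) b.phi_has_derivative(5)]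
    has_vector_derivative_Pair[OF a.phi_has_derivative(6) b.phi_has_derivative(6)]
  note cont = pair[OF a.continuous_on_phi(1) b.continuous_on_phi(1)]
    pair[OF a.continuous_on_phi(2) b.continuous_on_phi(2)]
    pair[OF a.continuous_on_phi(3) b.continuous_on_phi(3)]
    pair[OF a.continuous_on_phi(4) b.continuous_on_phi(4)]
    pair[OF a.continuous_on_phi(5) b.continuous_on_phi(5)]
    pair[OF a.continuous_on_phi(6) b.continuous_on_phi(6)]
  note first = partials_of_partials[OF derivs(1,2) cont(2), folded g]
  note second = C2_of_partials[OF derivs cont, folded g]
  show "C2 immersion"
    "dx immersion = (\<lambda>z. (a.phi_x (Re z) (Im z), b.phi_x (Re z) (Im z)))"
    "dy immersion = (\<lambda>z. (a.phi_y (Re z) (Im z), b.phi_y (Re z) (Im z)))"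
    "dx (dx immersion) = (\<lambda>z. (a.phi_xx (Re z) (Im z), b.phi_xx (Re z) (Im z)))"
    "dy (dy immersion) = (\<lambda>z. (a.phi_yy (Re z) (Im z), b.phi_yy (Re z) (Im z)))"
    using first(3,4) second by simp_all
  show "frechet_derivative immersion (at z) = (\<lambda>h. Re h *\<^sub>R dx immersion z + Im h *\<^sub>R dy immersion z)"
    using first(2,3,4) by simp
qed


lemma cos_sin_half: "c\<^sup>2 + s\<^sup>2 = 1"
  by (simp add: add.commute)

lemma metric_eq: "metric z = 4 * ((cosh (v z) * cosh (w z) + sinh (v z) * sinh (w z)) *
    (cosh (v z) * cosh (w z) - sinh (v z) * sinh (w z)))"
  by (simp add: metric_def cosh_add cosh_diff)

lemma immersion_first_fundamental_form:
  "dx immersion z \<bullet> dx immersion z = metric z"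
  "dy immersion z \<bullet> dy immersion z = metric z"
  "dx immersion z \<bullet> dy immersion z = 0"
proof -
  note ids = cosh_sinh_identities[OF cos_sin_half cosh_square_eq[of "v z"] cosh_square_eq[of "w z"]]
  show "dx immersion z \<bullet> dx immersion z = metric z"
    using ids(1) by (simp add: immersion_partials a.phi_inner b.phi_inner frame_coefficients metric_eq)
  show "dy immersion z \<bullet> dy immersion z = metric z"
    using ids(2) by (simp add: immersion_partials a.phi_inner b.phi_inner frame_coefficients metric_eq)
  show "dx immersion z \<bullet> dy immersion z = 0"
    using cosh_square_eq[of "v z"] cosh_square_eq[of "w z"]
    by (simp add: immersion_partials a.phi_inner b.phi_inner frame_coefficients algebra_simps) algebra
qed

lemma metric_pos: "metric z > 0"
  by (simp add: metric_def)

lemma immersion_derivative_inj: "inj (frechet_derivative immersion (at z))"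
proof (rule injI)
  fix h1 h2
  let ?X = "dx immersion z" and ?Y = "dy immersion z"
  assume "frechet_derivative immersion (at z) h1 = frechet_derivative immersion (at z) h2"
  then have e: "Re h1 *\<^sub>R ?X + Im h1 *\<^sub>R ?Y = Re h2 *\<^sub>R ?X + Im h2 *\<^sub>R ?Y"
    by (simp add: immersion_partials(6))
  have "(Re h1 *\<^sub>R ?X + Im h1 *\<^sub>R ?Y) \<bullet> ?X = (Re h2 *\<^sub>R ?X + Im h2 *\<^sub>R ?Y) \<bullet> ?X"
    "(Re h1 *\<^sub>R ?X + Im h1 *\<^sub>R ?Y) \<bullet> ?Y = (Re h2 *\<^sub>R ?X + Im h2 *\<^sub>R ?Y) \<bullet> ?Y"
    using e by simp_all
  then have "Re h1 * metric z = Re h2 * metric z" "Im h1 * metric z = Im h2 * metric z"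
    by (simp_all add: inner_add_left immersion_first_fundamental_form inner_commute[of ?Y ?X])
  then show "h1 = h2"
    using metric_pos[of z] by (simp add: complex_eq_iff)
qed

lemma immersion_minimal: "minimal_conformal_immersion immersion metric"
proof -
  have "in_S2xS2 (immersion z)" for z
    using a.phi_inner(1) b.phi_inner(1) by (simp add: in_S2xS2_def immersion_def norm_eq_sqrt_inner)
  moreover have "mean_curvature immersion metric z = 0" for z
    unfolding mean_curvature_def immersion_partials(4,5)
    by (simp add: tang_proj_def immersion_def a.phi_laplacian b.phi_laplacian a.phi_inner(1)
        b.phi_inner(1) zero_prod_def)
  ultimately show ?thesis
    unfolding minimal_conformal_immersion_def conformal_immersion_metric_def
    using immersion_partials(1) immersion_derivative_inj metric_pos immersion_first_fundamental_form
    by blast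
qed

lemma immersion_kaehler:
  "kaehler1 immersion metric z = tanh (v z - w z)"
  "kaehler2 immersion metric z = tanh (v z + w z)"
proof -
  note ids = cosh_sinh_identities[OF cos_sin_half cosh_square_eq[of "v z"] cosh_square_eq[of "w z"]]
  have "J1 (immersion z) (dx immersion z) \<bullet> dy immersion z =
      4 * (cosh (v z) * sinh (v z) - cosh (w z) * sinh (w z))"
    by (simp add: J1_def immersion_def immersion_partials a.phi_cross b.phi_cross frame_coefficients)
      (insert cos_sin_half, algebra)
  also have "\<dots> = 4 * cosh (v z + w z) * sinh (v z - w z)"
    using ids(3) by (simp add: cosh_add sinh_diff)
  finally show "kaehler1 immersion metric z = tanh (v z - w z)"
    by (simp add: kaehler1_def metric_def tanh_def)
  have "J2 (immersion z) (dx immersion z) \<bullet> dy immersion z =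
      4 * (cosh (v z) * sinh (v z) + cosh (w z) * sinh (w z))"
    by (simp add: J2_def immersion_def immersion_partials a.phi_cross b.phi_cross frame_coefficients)
      (insert cos_sin_half, algebra)
  also have "\<dots> = 4 * cosh (v z - w z) * sinh (v z + w z)"
    using ids(4) by (simp add: cosh_diff sinh_add)
  finally show "kaehler2 immersion metric z = tanh (v z + w z)"
    by (simp add: kaehler2_def metric_def tanh_def)
qed

lemma immersion_hopf: "hopf immersion z = cis t"
proof -
  have cos_t: "cos t = c\<^sup>2 - s\<^sup>2" and sin_t: "sin t = 2 * s * c"
    using cos_double[of "t/2"] sin_double[of "t/2"] by simp_all
  note simps = hopf_def cinner_def dz_def J1_def J2_def immersion_def immersion_partials
    cross_mult_right cross_minus_right a.phi_cross_cross b.phi_cross_cross a.phi_inner b.phi_inner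
    frame_coefficients
  have "Re (hopf immersion z) = cos t"
    using cos_sin_half cosh_square_eq[of "v z"] cosh_square_eq[of "w z"]
    by (simp add: simps cos_t) algebra
  moreover have "Im (hopf immersion z) = sin t"
    using cos_sin_half cosh_square_eq[of "v z"] cosh_square_eq[of "w z"]
    by (simp add: simps sin_t) algebra
  ultimately show ?thesis by (simp add: complex_eq_iff)
qed


lemma immersion_properties:
  "minimal_conformal_immersion immersion metric \<and>
   (\<forall>z. kaehler1 immersion metric z = tanh (v z - w z) \<and> kaehler2 immersion metric z = tanh (v z + w z)) \<and>
   (\<forall>z. (kaehler1 immersion metric z)\<^sup>2 \<noteq> 1 \<and> (kaehler2 immersion metric z)\<^sup>2 \<noteq> 1) \<and>
   (\<forall>z. hopf immersion z = cis t)"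
  using immersion_minimal immersion_kaehler immersion_hopf power2_tanh_real_neq_1 by simp

end

theorem theorem4p4:
  fixes v w :: "complex \<Rightarrow> real"
  assumes "sinh_gordon v" and "sinh_gordon w"
  shows "\<exists>\<Phi> :: real \<Rightarrow> complex \<Rightarrow> pt. \<forall>t::real.
     (let lam = (\<lambda>z. 4 * cosh (v z + w z) * cosh (v z - w z)) in
       minimal_conformal_immersion (\<Phi> t) lam \<and>
       (\<forall>z. kaehler1 (\<Phi> t) lam z = tanh (v z - w z) \<and>
            kaehler2 (\<Phi> t) lam z = tanh (v z + w z)) \<and>
       (\<forall>z. (kaehler1 (\<Phi> t) lam z)\<^sup>2 \<noteq> 1 \<and> (kaehler2 (\<Phi> t) lam z)\<^sup>2 \<noteq> 1) \<and>
       (\<forall>z. hopf (\<Phi> t) z = cis t))"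
proof -
  { fix t
    interpret sinh_gordon_pair v w t
      using assms by unfold_locales
    have "metric = (\<lambda>z. 4 * cosh (v z + w z) * cosh (v z - w z))"
      by (simp add: fun_eq_iff metric_def)
    note immersion_properties[unfolded this] }
  then show ?thesis
    unfolding Let_def by (intro exI[of _ "sinh_gordon_pair.immersion v w"] allI)
qed

end
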